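(* Let $f:\mathbb{R}^d\to\mathbb{R}$ be $\beta$-smooth with minimum value $f^\star$, and run AdaSGD (as defined in the context) for $T$ steps with parameters $\eta,\gamma>0$ using a stochastic gradient oracle with bounded affine noise with parameters $\sigma_0,\sigma_1\ge0$. Then for any $\delta\in(0,1)$, with probability at least $1-2\delta$, $$\sum_{t=1}^T\nabla f(w_t)\cdot(\nabla f(w_t)-g_t)\le\frac14\sum_{t=1}^T\|\nabla f(w_t)\|^2+3(\sigma_0^2+2\beta\sigma_1^2F)\log\tfrac1\delta,$$ where $\Delta_1=f(w_1)-f^\star$, $F=2\Delta_1+(3\log\frac T\delta+4C_1)\eta\sigma_0+(9\log^2\frac T\delta+16C_1^2)\eta^2\beta\sigma_1^2+\eta^2\beta C_1$ and $C_1=\log\big(1+\frac{2\sigma_0^2T+8(1+\sigma_1^2)(\eta^2\beta^2T^3+\beta\Delta_1T)}{\gamma^2}\big)$.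
   Context: $\|\cdot\|$ is the Euclidean norm and $\log$ the base-2 logarithm. $\beta$-smooth: $\|\nabla f(x)-\nabla f(y)\|\le\beta\|x-y\|$. Oracle: queried at $w$, returns random $g(w)$ with $\mathbb{E}[g(w)\mid w]=\nabla f(w)$ and, with probability one, $\|g(w)-\nabla f(w)\|^2\le\sigma_0^2+\sigma_1^2\|\nabla f(w)\|^2$. AdaSGD: arbitrary $w_1$; for $t=1,\dots,T$, $g_t=g(w_t)$ a fresh oracle answer ($\mathbb{E}[g_t\mid g_1,\dots,g_{t-1}]=\nabla f(w_t)$), $\eta_t=\eta/\sqrt{\gamma^2+\sum_{s=1}^t\|g_s\|^2}$, $w_{t+1}=w_t-\eta_tg_t$. *)

theory Defs
  imports "HOL-Probability.Probability"
begin

definition nat_filt :: "'a measure \<Rightarrow> (nat \<Rightarrow> 'a \<Rightarrow> 'd::euclidean_space) \<Rightarrow> nat \<Rightarrow> 'a measure" where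
  "nat_filt M g t = sigma (space M) (\<Union>s\<in>{1..<t}. {g s -` B \<inter> space M | B. B \<in> sets borel})"

text \<open>AdaSGD iterates: ada_w w1 eta gamma g t x is w_t (for t >= 1) on sample point x:
  w_1 = w1, w_(t+1) = w_t - eta_t g_t, eta_t = eta / sqrt(gamma^2 + sum_(s=1..t) |g_s|^2).\<close>
primrec ada_w :: "'d::euclidean_space \<Rightarrow> real \<Rightarrow> real \<Rightarrow> (nat \<Rightarrow> 'a \<Rightarrow> 'd) \<Rightarrow> nat \<Rightarrow> 'a \<Rightarrow> 'd" where
  "ada_w w1 eta gamma g 0 x = w1"
| "ada_w w1 eta gamma g (Suc t) x =
     (if t = 0 then w1
      else ada_w w1 eta gamma g t x
           - (eta / sqrt (gamma\<^sup>2 + (\<Sum>s=1..t. (norm (g s x))\<^sup>2))) *\<^sub>R g t x)"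

end

theory Submission
  imports Defs "HOL-Analysis.Harmonic_Numbers"
begin

text \<open>
  By the descent lemma, \<open>f (w (t+1)) \<le> f (w t) - eta\<^sub>t \<nabla>f(w t) \<bullet> g\<^sub>t + beta/2 eta\<^sub>t\<^sup>2 \<parallel>g\<^sub>t\<parallel>\<^sup>2\<close>.
  The AdaGrad step \<open>eta\<^sub>t\<close> depends on \<open>g\<^sub>t\<close>; replacing it by the decorrelated step
  \<open>eta / sqrt (b\<^sub>t\<^sub>-\<^sub>1\<^sup>2 + \<parallel>\<nabla>f(w t)\<parallel>\<^sup>2 + \<sigma>\<^sub>0\<^sup>2 + \<sigma>\<^sub>1\<^sup>2 \<parallel>\<nabla>f(w t)\<parallel>\<^sup>2)\<close>, which is
  predictable, costs a quarter of the descent term plus a multiple of \<open>\<parallel>g\<^sub>t\<parallel>\<^sup>2 / b\<^sub>t\<^sup>2\<close>,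
  and these ratios sum to at most \<open>ln (b\<^sub>T\<^sup>2 / gamma\<^sup>2) \<le> C\<^sub>1 ln 2\<close>.
  What remains is a sum of martingale differences \<open>Z\<^sub>s\<close> dominated by predictable \<open>Y\<^sub>s\<close>;
  the supermartingale \<open>exp (\<Sum> l Z\<^sub>s - l\<^sup>2 Y\<^sub>s\<^sup>2 / 2)\<close> and Markov's inequality bound it by
  its quadratic variation. Truncating every term by the indicator of \<open>f (w t) - f\<^sup>\<star> \<le> F\<close>,
  an induction over \<open>t\<close> and a union bound show that with probability \<open>1 - delta\<close> all
  iterates satisfy \<open>f (w t) - f\<^sup>\<star> \<le> F\<close>, the constant \<open>F\<close> being chosen to absorb its own bound.
  On that event \<open>\<parallel>\<nabla>f(w t)\<parallel>\<^sup>2 \<le> 2 beta F\<close>, so the noise in the sum of the theorem has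
  variance proxy \<open>\<sigma>\<^sub>0\<^sup>2 + 2 beta \<sigma>\<^sub>1\<^sup>2 F\<close>, and the same tail bound applied once more costs
  another \<open>delta\<close>.
\<close>

section \<open>Smooth functions\<close>

lemma descent_lemma:
  fixes f :: "'d::euclidean_space \<Rightarrow> real" and G :: "'d \<Rightarrow> 'd"
  assumes grad: "\<And>x. (f has_derivative (\<lambda>h. G x \<bullet> h)) (at x)"
    and smooth: "\<And>x y. norm (G x - G y) \<le> beta * norm (x - y)"
  shows "f y \<le> f x + G x \<bullet> (y - x) + beta / 2 * (norm (y - x))\<^sup>2"
proof -
  define d where "d = y - x"
  define \<phi> where "\<phi> = (\<lambda>s. f (x + s *\<^sub>R d) - s * (G x \<bullet> d) - beta / 2 * s\<^sup>2 * (norm d)\<^sup>2)"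
  have \<phi>_deriv: "DERIV \<phi> s :> (G (x + s *\<^sub>R d) \<bullet> d - G x \<bullet> d - beta * s * (norm d)\<^sup>2)" for s
  proof -
    have "((\<lambda>s. x + s *\<^sub>R d) has_derivative (\<lambda>h. h *\<^sub>R d)) (at s)"
      by (auto intro!: derivative_eq_intros)
    then have "((\<lambda>s. f (x + s *\<^sub>R d)) has_derivative (\<lambda>h. G (x + s *\<^sub>R d) \<bullet> (h *\<^sub>R d))) (at s)"
      using has_derivative_compose[OF _ grad] by blast
    then have f_deriv: "((\<lambda>s. f (x + s *\<^sub>R d)) has_real_derivative (G (x + s *\<^sub>R d) \<bullet> d)) (at s)"
      by (rule has_derivative_imp_has_field_derivative) (simp add: mult.commute)
    show ?thesis unfolding \<phi>_def
      by (rule f_deriv derivative_eq_intros refl | simp add: power2_eq_square algebra_simps)+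
  qed
  have "\<phi> 1 \<le> \<phi> 0"
  proof (rule DERIV_nonpos_imp_nonincreasing[of 0 1])
    fix s :: real assume s: "0 \<le> s" "s \<le> 1"
    have "G (x + s *\<^sub>R d) \<bullet> d - G x \<bullet> d = (G (x + s *\<^sub>R d) - G x) \<bullet> d"
      by (simp add: inner_diff_left)
    also have "\<dots> \<le> norm (G (x + s *\<^sub>R d) - G x) * norm d" by (rule norm_cauchy_schwarz)
    also have "\<dots> \<le> beta * norm (s *\<^sub>R d) * norm d"
      using smooth[of "x + s *\<^sub>R d" x] by (intro mult_right_mono) auto
    also have "\<dots> = beta * s * (norm d)\<^sup>2" using s by (simp add: power2_eq_square)
    finally show "\<exists>y. DERIV \<phi> s :> y \<and> y \<le> 0" using \<phi>_deriv by (intro exI conjI) auto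
  qed simp
  then show ?thesis unfolding \<phi>_def d_def by (simp add: algebra_simps)
qed

lemma lipschitz_bound_nonneg:
  fixes G :: "'d::euclidean_space \<Rightarrow> 'e::real_normed_vector"
  assumes "\<And>x y. norm (G x - G y) \<le> beta * norm (x - y)"
  shows "beta \<ge> 0"
proof -
  obtain b :: 'd where b: "b \<in> Basis" using nonempty_Basis by blast
  have "0 \<le> norm (G b - G 0)" by simp
  also have "\<dots> \<le> beta * norm (b - 0)" by (rule assms)
  finally show ?thesis using b by (simp add: zero_le_mult_iff)
qed

lemma norm_grad_sq_le_suboptimality:
  fixes f :: "'d::euclidean_space \<Rightarrow> real" and G :: "'d \<Rightarrow> 'd"
  assumes grad: "\<And>x. (f has_derivative (\<lambda>h. G x \<bullet> h)) (at x)"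
    and smooth: "\<And>x y. norm (G x - G y) \<le> beta * norm (x - y)"
    and fmin: "\<And>x. fstar \<le> f x"
  shows "(norm (G x))\<^sup>2 \<le> 2 * beta * (f x - fstar)"
proof (cases "beta = 0")
  case True
  have "(norm (G x))\<^sup>2 \<le> 0"
  proof (rule ccontr)
    assume "\<not> ?thesis"
    then have pos: "(norm (G x))\<^sup>2 > 0" by simp
    define s where "s = (f x - fstar + 1) / (norm (G x))\<^sup>2"
    have "fstar \<le> f (x - s *\<^sub>R G x)" by (rule fmin)
    also have "\<dots> \<le> f x + G x \<bullet> ((x - s *\<^sub>R G x) - x)"
      using descent_lemma[OF grad smooth, of "x - s *\<^sub>R G x" x] True by simp
    also have "\<dots> = fstar - 1" using pos by (simp add: s_def power2_norm_eq_inner)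
    finally show False by simp
  qed
  then show ?thesis using True by simp
next
  case False
  then have beta: "beta > 0" using lipschitz_bound_nonneg[OF smooth] by simp
  \<comment> \<open>one gradient step of length \<open>1/beta\<close> decreases \<open>f\<close> by \<open>\<parallel>G x\<parallel>\<^sup>2/(2 beta)\<close>\<close>
  have "fstar \<le> f (x - (1/beta) *\<^sub>R G x)" by (rule fmin)
  also have "\<dots> \<le> f x + G x \<bullet> ((x - (1/beta) *\<^sub>R G x) - x) + beta / 2 * (norm ((x - (1/beta) *\<^sub>R G x) - x))\<^sup>2"
    by (rule descent_lemma[OF grad smooth])
  also have "\<dots> = f x - (norm (G x))\<^sup>2 / (2 * beta)"
    using beta by (simp add: power2_norm_eq_inner[symmetric] power2_eq_square field_simps)
  finally show ?thesis using beta by (simp add: field_simps)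
qed

lemma cosh_le_exp_half_sq: "cosh (x::real) \<le> exp (x\<^sup>2 / 2)"
proof -
  have *: "cosh y \<le> exp (y\<^sup>2 / 2)" if "y \<ge> 0" for y :: real
  proof -
    have "-(2*y) * (1/2) + ln (1 + (1/2) * (exp (2*y) - 1)) \<le> (2*y)\<^sup>2 / 8"
      using Hoeffdings_lemma_aux[of "2*y" "1/2"] that by simp
    then have "ln ((1 + exp (2*y)) / 2) \<le> y + y\<^sup>2 / 2"
      by (simp add: power2_eq_square field_simps)
    then have "(1 + exp (2*y)) / 2 \<le> exp (y + y\<^sup>2 / 2)"
      by (metis add_pos_pos divide_pos_pos exp_gt_zero exp_le_cancel_iff exp_ln zero_less_numeral zero_less_one)
    then have "exp (-y) * ((1 + exp (2*y)) / 2) \<le> exp (-y) * exp (y + y\<^sup>2 / 2)"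
      by (intro mult_left_mono) auto
    then show ?thesis by (simp add: cosh_def field_simps flip: exp_add)
  qed
  show ?thesis using *[of x] *[of "-x"] by (cases "x \<ge> 0") auto
qed

text \<open>\<open>chord_slope l y\<close> is the slope of the chord of \<open>z \<mapsto> exp (l * z)\<close> over \<open>[-y, y]\<close>;
  its value at \<open>y = 0\<close> is irrelevant.\<close>
definition chord_slope :: "real \<Rightarrow> real \<Rightarrow> real" where
  "chord_slope l y = (if y = 0 then 0 else sinh (l * y) / y)"

lemma exp_le_chord:
  fixes l y z :: real
  assumes "\<bar>z\<bar> \<le> y"
  shows "exp (l * z) \<le> cosh (l * y) + chord_slope l y * z"
proof (cases "y = 0")
  case True then show ?thesis using assms by (simp add: chord_slope_def)
next
  case False
  then have y: "y > 0" using assms by linarith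
  define a where "a = (y + z) / (2 * y)"
  have a: "0 \<le> a" "a \<le> 1" using assms y by (auto simp: a_def field_simps abs_le_iff)
  have "exp ((1 - a) *\<^sub>R (-(l*y)) + a *\<^sub>R (l*y)) \<le> (1 - a) * exp (-(l*y)) + a * exp (l*y)"
    using a exp_convex by (intro convex_onD) auto
  moreover have "(1 - a) *\<^sub>R (-(l*y)) + a *\<^sub>R (l*y) = l * z"
    using y by (simp add: a_def field_simps)
  moreover have "(1 - a) * exp (-(l*y)) + a * exp (l*y) = cosh (l * y) + chord_slope l y * z"
    using y by (simp add: a_def chord_slope_def cosh_def sinh_def field_simps)
  ultimately show ?thesis by simp
qed

lemma abs_chord_slope_le:
  fixes l y B :: real
  assumes "l > 0" "0 \<le> y" "y \<le> B"
  shows "\<bar>chord_slope l y\<bar> \<le> l * exp (l * B)"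
proof (cases "y = 0")
  case True then show ?thesis using assms by (simp add: chord_slope_def)
next
  case False
  then have y: "y > 0" using assms by simp
  have sinh_le: "sinh u \<le> u * exp u" if "u \<ge> 0" for u :: real
  proof -
    have "exp u * (1 - 2 * u) \<le> exp u * exp (-2 * u)"
      using exp_ge_add_one_self[of "-2*u"] by (intro mult_left_mono) auto
    then show ?thesis by (simp add: sinh_def algebra_simps flip: exp_add)
  qed
  have "sinh (l * y) / y \<le> l * y * exp (l * y) / y"
    using sinh_le[of "l*y"] assms by (intro divide_right_mono) auto
  also have "\<dots> \<le> l * exp (l * B)" using assms y by simp
  finally show ?thesis using assms y by (simp add: chord_slope_def)
qed

text \<open>The one-step inequality behind the exponential supermartingale: the linear term
  vanishes in conditional expectation.\<close>
lemma exp_sub_half_sq_le_linear: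
  fixes l y z :: real
  assumes "\<bar>z\<bar> \<le> y"
  shows "exp (l * z - (l * y)\<^sup>2 / 2) \<le> 1 + exp (- ((l * y)\<^sup>2 / 2)) * chord_slope l y * z"
proof -
  have "exp (l * z - (l * y)\<^sup>2 / 2) = exp (- ((l * y)\<^sup>2 / 2)) * exp (l * z)"
    by (simp flip: exp_add)
  also have "\<dots> \<le> exp (- ((l * y)\<^sup>2 / 2)) * (cosh (l * y) + chord_slope l y * z)"
    using exp_le_chord[OF assms] by (intro mult_left_mono) auto
  also have "\<dots> \<le> exp (- ((l * y)\<^sup>2 / 2)) * exp ((l * y)\<^sup>2 / 2) + exp (- ((l * y)\<^sup>2 / 2)) * chord_slope l y * z"
    using cosh_le_exp_half_sq[of "l * y"] by (simp add: distrib_left)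
  also have "\<dots> = 1 + exp (- ((l * y)\<^sup>2 / 2)) * chord_slope l y * z"
    by (simp flip: exp_add)
  finally show ?thesis .
qed

lemma sum_div_partial_sums_le_ln:
  fixes a :: "nat \<Rightarrow> real" and c :: real
  assumes c: "c > 0" and a: "\<And>s. a s \<ge> 0"
  shows "(\<Sum>s=1..t. a s / (c + (\<Sum>r=1..s. a r))) \<le> ln ((c + (\<Sum>r=1..t. a r)) / c)"
proof (induction t)
  case 0 then show ?case using c by simp
next
  case (Suc t)
  define P where "P = c + (\<Sum>r=1..t. a r)"
  have P: "P > 0" "P + a (Suc t) > 0"
    unfolding P_def using c a by (auto intro!: add_pos_nonneg sum_nonneg)
  have "ln (P / (P + a (Suc t))) \<le> P / (P + a (Suc t)) - 1"
    using P by (intro ln_le_minus_one) simp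
  also have "\<dots> = - (a (Suc t) / (P + a (Suc t)))" using P by (simp add: field_simps)
  finally have "a (Suc t) / (P + a (Suc t)) \<le> ln ((P + a (Suc t)) / c) - ln (P / c)"
    using P c by (simp add: ln_div)
  with Suc.IH have "(\<Sum>s=1..t. a s / (c + (\<Sum>r=1..s. a r))) + a (Suc t) / (P + a (Suc t))
      \<le> ln ((P + a (Suc t)) / c)"
    unfolding P_def by linarith
  then show ?case by (simp add: P_def add.assoc)
qed

lemma ln_le_log2: "1 \<le> x \<Longrightarrow> ln x \<le> log 2 x"
proof -
  assume "1 \<le> x"
  then have "ln 2 * ln x \<le> 1 * ln x" using ln_2_less_1 by (intro mult_right_mono) auto
  then show ?thesis by (simp add: log_def field_simps)
qed

lemma abs_sqrt_add_sq_diff_le: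
  fixes c u v :: real
  assumes "c \<ge> 0" "u \<ge> 0" "v \<ge> 0"
  shows "\<bar>sqrt (c + u\<^sup>2) - sqrt (c + v\<^sup>2)\<bar> \<le> \<bar>u - v\<bar>"
proof (cases "u + v = 0")
  case True
  then have "u = 0" "v = 0" using assms by auto
  then show ?thesis by simp
next
  case False
  define A B where "A = sqrt (c + u\<^sup>2)" and "B = sqrt (c + v\<^sup>2)"
  have AB: "u \<le> A" "v \<le> B" unfolding A_def B_def using assms by (auto intro: real_le_rsqrt)
  have "(A - B) * (A + B) = (u - v) * (u + v)"
    unfolding A_def B_def using assms by (simp add: algebra_simps flip: power2_eq_square)
  then have "\<bar>A - B\<bar> * \<bar>A + B\<bar> = \<bar>u - v\<bar> * \<bar>u + v\<bar>" by (metis abs_mult)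
  then have "\<bar>A - B\<bar> * (A + B) = \<bar>u - v\<bar> * (u + v)" using AB assms by simp
  moreover have "\<bar>A - B\<bar> * (u + v) \<le> \<bar>A - B\<bar> * (A + B)" using AB by (intro mult_left_mono) auto
  ultimately show ?thesis using False assms unfolding A_def B_def by (simp add: mult_le_cancel_right)
qed

lemma abs_norm_sub_sqrt_sq_add_le:
  fixes G g :: "'d::real_normed_vector" and ss :: real
  assumes ss: "ss \<ge> 0" and noise: "norm (g - G) \<le> ss"
  shows "\<bar>norm g - sqrt ((norm G)\<^sup>2 + ss\<^sup>2)\<bar> \<le> 3/2 * ss"
proof -
  have upper: "norm g \<le> norm G + ss"
    using norm_triangle_ineq[of G "g - G"] noise by simp
  have lower: "norm G - ss \<le> norm g"
    using norm_triangle_ineq2[of G "G - g"] norm_minus_commute[of G g] noise by simp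
  have "norm G \<le> sqrt ((norm G)\<^sup>2 + ss\<^sup>2)" by (intro real_le_rsqrt) auto
  moreover have "sqrt ((norm G)\<^sup>2 + ss\<^sup>2) \<le> norm g + 3/2 * ss"
  proof (cases "norm G \<ge> ss")
    case True
    have "ss * ss \<le> norm G * ss" using True ss by (intro mult_right_mono)
    then have "(norm G)\<^sup>2 + ss\<^sup>2 \<le> (norm G + ss / 2)\<^sup>2"
      by (simp add: power2_eq_square algebra_simps, insert mult_nonneg_nonneg[OF ss ss], linarith)
    then have "sqrt ((norm G)\<^sup>2 + ss\<^sup>2) \<le> norm G + ss / 2" using ss by (intro real_le_lsqrt) auto
    then show ?thesis using lower by linarith
  next
    case False
    have "norm G * norm G \<le> ss * ss" using False ss by (intro mult_mono) auto
    then have "(norm G)\<^sup>2 + ss\<^sup>2 \<le> (3/2 * ss)\<^sup>2"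
      by (simp add: power2_eq_square, insert mult_nonneg_nonneg[OF ss ss], linarith)
    then have "sqrt ((norm G)\<^sup>2 + ss\<^sup>2) \<le> 3/2 * ss" using ss by (intro real_le_lsqrt) auto
    then show ?thesis using norm_ge_zero[of g] by linarith
  qed
  ultimately show ?thesis using upper ss by linarith
qed

lemma abs_sqrt_norm_sq_sub_sqrt_le:
  fixes G g :: "'d::real_normed_vector" and c ss :: real
  assumes "c \<ge> 0" "ss \<ge> 0" "norm (g - G) \<le> ss"
  shows "\<bar>sqrt (c + (norm g)\<^sup>2) - sqrt (c + (norm G)\<^sup>2 + ss\<^sup>2)\<bar> \<le> 3/2 * ss"
proof -
  have "\<bar>sqrt (c + (norm g)\<^sup>2) - sqrt (c + (norm G)\<^sup>2 + ss\<^sup>2)\<bar>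
      \<le> \<bar>norm g - sqrt ((norm G)\<^sup>2 + ss\<^sup>2)\<bar>"
    using abs_sqrt_add_sq_diff_le[of c "norm g" "sqrt ((norm G)\<^sup>2 + ss\<^sup>2)"] assms
    by (simp add: add.assoc)
  also have "\<dots> \<le> 3/2 * ss" using assms by (intro abs_norm_sub_sqrt_sq_add_le)
  finally show ?thesis .
qed

text \<open>Replacing the step size \<open>eta / sqrt (c + \<parallel>g\<parallel>\<^sup>2)\<close>, which depends on the stochastic
  gradient \<open>g\<close>, by one that depends only on the true gradient \<open>G\<close> and the noise level \<open>ss\<close>.\<close>
lemma stepsize_decorrelation_error:
  fixes G g :: "'d::real_inner" and c eta ss :: real
  assumes c: "c > 0" and eta: "eta \<ge> 0" and ss: "ss \<ge> 0" and noise: "norm (g - G) \<le> ss"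
  defines "b \<equiv> sqrt (c + (norm g)\<^sup>2)" and "b' \<equiv> sqrt (c + (norm G)\<^sup>2 + ss\<^sup>2)"
  shows "(eta / b' - eta / b) * (G \<bullet> g)
         \<le> 1/4 * (eta / b') * (norm G)\<^sup>2 + 9/4 * eta * ss * (norm g)\<^sup>2 / b\<^sup>2"
proof -
  have b: "b > 0" unfolding b_def using c by (intro real_sqrt_gt_zero add_pos_nonneg) auto
  have b': "b' > 0" unfolding b'_def using c by (intro real_sqrt_gt_zero add_pos_nonneg) auto
  have ss_le: "ss \<le> b'" unfolding b'_def using c by (intro real_le_rsqrt) auto
  have gap: "\<bar>b - b'\<bar> \<le> 3/2 * ss"
    unfolding b_def b'_def using c ss noise by (intro abs_sqrt_norm_sq_sub_sqrt_le) auto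
  have "(eta / b' - eta / b) * (G \<bullet> g) \<le> \<bar>eta / b' - eta / b\<bar> * \<bar>G \<bullet> g\<bar>"
    by (metis abs_ge_self abs_mult)
  also have "\<dots> \<le> (eta * (3/2 * ss) / (b * b')) * (norm G * norm g)"
  proof (intro mult_mono)
    have "eta / b' - eta / b = eta * (b - b') / (b * b')" using b b' by (simp add: field_simps)
    then have "\<bar>eta / b' - eta / b\<bar> = eta * \<bar>b - b'\<bar> / (b * b')"
      using b b' eta by (simp add: abs_mult abs_div)
    also have "\<dots> \<le> eta * (3/2 * ss) / (b * b')"
      using gap eta b b' by (intro divide_right_mono mult_left_mono) auto
    finally show "\<bar>eta / b' - eta / b\<bar> \<le> eta * (3/2 * ss) / (b * b')" .
  qed (use eta ss b b' Cauchy_Schwarz_ineq2 in auto)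
  also have "\<dots> = (eta / b') * (3/2 * ss * norm G * norm g / b)" using b b' by (simp add: field_simps)
  also have "\<dots> \<le> (eta / b') * (1/4 * (norm G)\<^sup>2 + 9/4 * ss\<^sup>2 * (norm g)\<^sup>2 / b\<^sup>2)"
  proof (intro mult_left_mono)
    \<comment> \<open>AM-GM\<close>
    have "0 \<le> 1/4 * (norm G - 3 * ss * norm g / b)\<^sup>2" by simp
    then show "3/2 * ss * norm G * norm g / b \<le> 1/4 * (norm G)\<^sup>2 + 9/4 * ss\<^sup>2 * (norm g)\<^sup>2 / b\<^sup>2"
      using b by (simp add: power2_eq_square field_simps)
  qed (use eta b' in auto)
  also have "\<dots> = 1/4 * (eta / b') * (norm G)\<^sup>2 + 9/4 * eta * ss * (norm g)\<^sup>2 / b\<^sup>2 * (ss / b')"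
    using b b' by (simp add: power2_eq_square field_simps)
  also have "\<dots> \<le> 1/4 * (eta / b') * (norm G)\<^sup>2 + 9/4 * eta * ss * (norm g)\<^sup>2 / b\<^sup>2"
    using ss_le b' eta ss by (intro add_left_mono mult_left_le) auto
  finally show ?thesis .
qed

lemma mult_sqrt_le_half_add_sq:
  fixes a F :: real
  assumes "F \<ge> 0"
  shows "a * sqrt F \<le> F / 2 + a\<^sup>2 / 2"
proof -
  have "0 \<le> (sqrt F - a)\<^sup>2" by simp
  then show ?thesis using assms by (simp add: power2_eq_square algebra_simps)
qed

lemma weighted_sq_sum_le:
  fixes L C l :: real
  assumes "0 \<le> l" "l \<le> 8/9"
  shows "2 * (l * (2/3 * L + 9/4 * C))\<^sup>2 \<le> 9 * L\<^sup>2 + 16 * C\<^sup>2"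
proof -
  have l_sq: "l\<^sup>2 \<le> (8/9)\<^sup>2" using assms by (intro power_mono) auto
  have sum_sq: "(2/3 * L + 9/4 * C)\<^sup>2 \<le> 2 * ((2/3 * L)\<^sup>2 + (9/4 * C)\<^sup>2)"
    using sum_squares_ge_zero[of "2/3*L - 9/4*C" 0] by (simp add: power2_eq_square algebra_simps)
  have "2 * (l * (2/3 * L + 9/4 * C))\<^sup>2 = 2 * (l\<^sup>2 * (2/3 * L + 9/4 * C)\<^sup>2)"
    by (simp add: power_mult_distrib)
  also have "\<dots> \<le> 2 * ((8/9)\<^sup>2 * (2 * ((2/3 * L)\<^sup>2 + (9/4 * C)\<^sup>2)))"
    using mult_mono[OF l_sq sum_sq] by simp
  also have "\<dots> \<le> 9 * L\<^sup>2 + 16 * C\<^sup>2" by (simp add: power2_eq_square)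
  finally show ?thesis .
qed

text \<open>The constant \<open>F\<close> of the theorem is chosen so that this holds: it absorbs the
  bound on \<open>f (w\<^sub>t) - fstar\<close> derived from the hypothesis \<open>f (w\<^sub>s) - fstar \<le> F\<close> for
  all \<open>s < t\<close>. Here \<open>l = ln 2\<close> converts the binary logarithms.\<close>
lemma self_bounding_constant:
  fixes D1 L C1 eta beta sigma0 sigma1 l F :: real
  assumes nn: "D1 \<ge> 0" "L \<ge> 0" "C1 \<ge> 0" "eta \<ge> 0" "beta \<ge> 0" "sigma0 \<ge> 0" "sigma1 \<ge> 0"
    and l: "0 \<le> l" "l \<le> 8/9"
    and F: "F = 2 * D1 + (3 * L + 4 * C1) * eta * sigma0
               + (9 * L\<^sup>2 + 16 * C1\<^sup>2) * eta\<^sup>2 * beta * sigma1\<^sup>2 + eta\<^sup>2 * beta * C1"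
  defines "c \<equiv> sigma0 + sigma1 * sqrt (2 * beta * F)"
  shows "D1 + 2/3 * eta * c * l * L + 9/4 * eta * c * l * C1 + beta * eta\<^sup>2 / 2 * l * C1 \<le> F"
proof -
  define A where "A = eta * l * (2/3 * L + 9/4 * C1)"
  have F0: "F \<ge> 0" unfolding F using nn by simp
  have lhs: "D1 + 2/3 * eta * c * l * L + 9/4 * eta * c * l * C1 + beta * eta\<^sup>2 / 2 * l * C1
      = D1 + A * sigma0 + (A * sigma1 * sqrt (2 * beta)) * sqrt F + l / 2 * beta * eta\<^sup>2 * C1"
    unfolding A_def c_def by (simp add: real_sqrt_mult algebra_simps)
  have am_gm: "(A * sigma1 * sqrt (2 * beta)) * sqrt F \<le> F / 2 + A\<^sup>2 * sigma1\<^sup>2 * beta"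
    using mult_sqrt_le_half_add_sq[OF F0, of "A * sigma1 * sqrt (2 * beta)"] nn
    by (simp add: power_mult_distrib)
  have sigma0_term: "A * sigma0 \<le> (3 * L + 4 * C1) * eta * sigma0 / 2"
  proof -
    have "2 * A = eta * (l * (4/3) * L + l * (9/2) * C1)" unfolding A_def by (simp add: algebra_simps)
    also have "\<dots> \<le> eta * (3 * L + 4 * C1)"
      using l nn by (intro mult_left_mono add_mono mult_right_mono) auto
    finally have "2 * A * sigma0 \<le> eta * (3 * L + 4 * C1) * sigma0"
      using nn by (intro mult_right_mono) auto
    then show ?thesis by (simp add: algebra_simps)
  qed
  have sigma1_term: "A\<^sup>2 * sigma1\<^sup>2 * beta \<le> (9 * L\<^sup>2 + 16 * C1\<^sup>2) * eta\<^sup>2 * beta * sigma1\<^sup>2 / 2"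
  proof -
    have "2 * A\<^sup>2 = eta\<^sup>2 * (2 * (l * (2/3 * L + 9/4 * C1))\<^sup>2)"
      unfolding A_def by (simp add: power_mult_distrib)
    also have "\<dots> \<le> eta\<^sup>2 * (9 * L\<^sup>2 + 16 * C1\<^sup>2)"
      using weighted_sq_sum_le[OF l] by (intro mult_left_mono) auto
    finally have "2 * A\<^sup>2 * (sigma1\<^sup>2 * beta) \<le> eta\<^sup>2 * (9 * L\<^sup>2 + 16 * C1\<^sup>2) * (sigma1\<^sup>2 * beta)"
      using nn by (intro mult_right_mono) auto
    then show ?thesis by (simp add: algebra_simps)
  qed
  have C1_term: "l / 2 * beta * eta\<^sup>2 * C1 \<le> eta\<^sup>2 * beta * C1 / 2"
  proof -
    have "l * (beta * eta\<^sup>2 * C1) \<le> 1 * (beta * eta\<^sup>2 * C1)" using l nn by (intro mult_right_mono) auto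
    then show ?thesis by (simp add: algebra_simps)
  qed
  show ?thesis unfolding lhs using am_gm sigma0_term sigma1_term C1_term F by linarith
qed

section \<open>Conditionally centred random vectors\<close>

lemma (in finite_measure) integrable_mult_inner_Basis:
  fixes U V :: "'a \<Rightarrow> 'd::euclidean_space"
  assumes i: "i \<in> Basis" and measurable: "U \<in> borel_measurable M" "V \<in> borel_measurable M"
    and bounded: "AE x in M. norm (U x) \<le> K" "AE x in M. norm (V x) \<le> C"
  shows "integrable M (\<lambda>x. (V x \<bullet> i) * (U x \<bullet> i))"
proof (rule integrable_const_bound[where B="max C 0 * K"])
  show "AE x in M. norm ((V x \<bullet> i) * (U x \<bullet> i)) \<le> max C 0 * K"
    using bounded(2,1)
  proof (rule AE_mp[OF _ AE_mp[OF _ AE_I2]], intro impI)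
    fix x assume "norm (V x) \<le> C" "norm (U x) \<le> K"
    then have "\<bar>V x \<bullet> i\<bar> \<le> max C 0" "\<bar>U x \<bullet> i\<bar> \<le> K"
      using Basis_le_norm[OF i, of "V x"] Basis_le_norm[OF i, of "U x"] by linarith+
    then show "norm ((V x \<bullet> i) * (U x \<bullet> i)) \<le> max C 0 * K"
      by (simp add: abs_mult) (intro mult_mono, auto)
  qed
qed (use measurable in measurable)

lemma (in prob_space) integral_inner_cond_exp_diff_eq_0:
  fixes V X Y :: "'a \<Rightarrow> 'd::euclidean_space"
  assumes F: "subalgebra M F"
    and V: "V \<in> borel_measurable F" "AE x in M. norm (V x) \<le> C"
    and X: "X \<in> borel_measurable M" "AE x in M. norm (X x) \<le> K"
    and Y: "Y \<in> borel_measurable M" "AE x in M. norm (Y x) \<le> K"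
    and cond_exp: "\<And>v. AE x in M. real_cond_exp M F (\<lambda>x. X x \<bullet> v) x = Y x \<bullet> v"
  shows "(\<integral>x. V x \<bullet> (X x - Y x) \<partial>M) = 0"
proof -
  interpret sigma_finite_subalgebra M F
    using F by (intro finite_measure_subalgebra_is_sigma_finite)
      (auto simp: finite_measure_subalgebra_def finite_measure_subalgebra_axioms_def finite_measure_axioms)
  have V_measurable[measurable]: "V \<in> borel_measurable M" using measurable_from_subalg[OF F V(1)] .
  note X(1)[measurable] Y(1)[measurable]
  have integrable: "integrable M (\<lambda>x. (V x \<bullet> i) * (U x \<bullet> i))"
    if "i \<in> Basis" "U \<in> borel_measurable M" "AE x in M. norm (U x) \<le> K" for U i
    using that V(2) V_measurable by (intro integrable_mult_inner_Basis) auto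
  have coordinate: "(\<integral>x. (V x \<bullet> i) * (X x \<bullet> i) \<partial>M) = (\<integral>x. (V x \<bullet> i) * (Y x \<bullet> i) \<partial>M)"
    if i: "i \<in> Basis" for i
  proof -
    have [measurable]: "(\<lambda>x. V x \<bullet> i) \<in> borel_measurable F" using V(1) by measurable
    have "(\<integral>x. (V x \<bullet> i) * (X x \<bullet> i) \<partial>M) = (\<integral>x. (V x \<bullet> i) * real_cond_exp M F (\<lambda>x. X x \<bullet> i) x \<partial>M)"
      by (rule real_cond_exp_intg(2)[symmetric]) (use integrable[OF i X] in measurable)
    also have "\<dots> = (\<integral>x. (V x \<bullet> i) * (Y x \<bullet> i) \<partial>M)"
      using cond_exp[of i] by (intro integral_cong_AE) (auto elim!: AE_mp)
    finally show ?thesis .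
  qed
  have "(\<integral>x. V x \<bullet> (X x - Y x) \<partial>M)
      = (\<integral>x. (\<Sum>i\<in>Basis. (V x \<bullet> i) * (X x \<bullet> i)) - (\<Sum>i\<in>Basis. (V x \<bullet> i) * (Y x \<bullet> i)) \<partial>M)"
    by (simp add: inner_diff_right euclidean_inner[of "V _" "X _"] euclidean_inner[of "V _" "Y _"])
  also have "\<dots> = (\<Sum>i\<in>Basis. (\<integral>x. (V x \<bullet> i) * (X x \<bullet> i) \<partial>M)) - (\<Sum>i\<in>Basis. (\<integral>x. (V x \<bullet> i) * (Y x \<bullet> i) \<partial>M))"
    using integrable[OF _ X] integrable[OF _ Y] by (simp add: integrable_sum)
  also have "\<dots> = 0" using coordinate by simp
  finally show ?thesis .
qed

section \<open>An exponential tail bound for dominated martingale differences\<close>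

text \<open>The martingale property is phrased as orthogonality of
  \<open>Z s\<close> to all bounded \<open>Fl s\<close>-measurable functions.\<close>
locale dominated_mds = prob_space M for M :: "'a measure" +
  fixes Fl :: "nat \<Rightarrow> 'a measure" and Z Y :: "nat \<Rightarrow> 'a \<Rightarrow> real" and B :: real and n :: nat
  assumes subalgebra_Fl: "\<And>s. subalgebra M (Fl s)"
    and subalgebra_Fl_Suc: "\<And>s. subalgebra (Fl (Suc s)) (Fl s)"
    and Z_measurable: "\<And>s. s \<in> {1..n} \<Longrightarrow> Z s \<in> borel_measurable (Fl (Suc s))"
    and Y_measurable: "\<And>s. s \<in> {1..n} \<Longrightarrow> Y s \<in> borel_measurable (Fl s)"
    and Y_bounded: "\<And>s x. s \<in> {1..n} \<Longrightarrow> x \<in> space M \<Longrightarrow> 0 \<le> Y s x \<and> Y s x \<le> B"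
    and Z_dominated: "\<And>s. s \<in> {1..n} \<Longrightarrow> AE x in M. \<bar>Z s x\<bar> \<le> Y s x"
    and Z_orthogonal: "\<And>s h C. s \<in> {1..n} \<Longrightarrow> h \<in> borel_measurable (Fl s) \<Longrightarrow>
                         (AE x in M. \<bar>h x\<bar> \<le> C) \<Longrightarrow> (\<integral>x. h x * Z s x \<partial>M) = 0"
begin

lemma subalgebra_Fl_mono: "s \<le> t \<Longrightarrow> subalgebra (Fl t) (Fl s)"
proof (induction t rule: dec_induct)
  case base then show ?case by (simp add: subalgebra_def)
next
  case (step t) then show ?case using subalgebra_Fl_Suc[of t] by (auto simp: subalgebra_def)
qed

lemma Z_borel_measurable: "s \<in> {1..n} \<Longrightarrow> Z s \<in> borel_measurable M"
  using measurable_from_subalg[OF subalgebra_Fl Z_measurable] .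

lemma Y_borel_measurable: "s \<in> {1..n} \<Longrightarrow> Y s \<in> borel_measurable M"
  using measurable_from_subalg[OF subalgebra_Fl Y_measurable] .

definition exp_mart :: "real \<Rightarrow> nat \<Rightarrow> 'a \<Rightarrow> real" where
  "exp_mart l k x = exp (\<Sum>s=1..k. l * Z s x - (l * Y s x)\<^sup>2 / 2)"

lemma exp_mart_pos: "exp_mart l k x > 0"
  by (simp add: exp_mart_def)

lemma exp_mart_measurable: "k \<le> n \<Longrightarrow> exp_mart l k \<in> borel_measurable (Fl (Suc k))"
proof -
  assume k: "k \<le> n"
  have "Z s \<in> borel_measurable (Fl (Suc k))" "Y s \<in> borel_measurable (Fl (Suc k))"
    if "s \<in> {1..k}" for s
    using that k measurable_from_subalg[OF subalgebra_Fl_mono Z_measurable, of s "Suc k"]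
      measurable_from_subalg[OF subalgebra_Fl_mono Y_measurable, of s "Suc k"] by auto
  then show ?thesis unfolding exp_mart_def by measurable
qed

lemma exp_mart_borel_measurable: "k \<le> n \<Longrightarrow> exp_mart l k \<in> borel_measurable M"
  using measurable_from_subalg[OF subalgebra_Fl exp_mart_measurable] .

lemma exp_mart_AE_le:
  assumes "l > 0" "k \<le> n"
  shows "AE x in M. exp_mart l k x \<le> exp (k * (l * B))"
proof -
  have "AE x in M. \<forall>s\<in>{1..k}. \<bar>Z s x\<bar> \<le> Y s x"
    using assms by (intro AE_finite_allI) (auto intro!: Z_dominated)
  then show ?thesis
  proof (rule AE_mp[OF _ AE_I2], intro impI)
    fix x assume x: "x \<in> space M" and dom: "\<forall>s\<in>{1..k}. \<bar>Z s x\<bar> \<le> Y s x"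
    have "l * Z s x - (l * Y s x)\<^sup>2 / 2 \<le> l * B" if "s \<in> {1..k}" for s
    proof -
      have "\<bar>Z s x\<bar> \<le> Y s x" using dom that by blast
      moreover have "Y s x \<le> B" using Y_bounded[of s x] x that assms by auto
      ultimately have "Z s x \<le> B" by linarith
      then have "l * Z s x \<le> l * B" using assms by (intro mult_left_mono) auto
      then show ?thesis using zero_le_power2[of "l * Y s x"] by linarith
    qed
    then have "(\<Sum>s=1..k. l * Z s x - (l * Y s x)\<^sup>2 / 2) \<le> (\<Sum>s=1..k. l * B)"
      by (rule sum_mono)
    then show "exp_mart l k x \<le> exp (k * (l * B))" by (simp add: exp_mart_def)
  qed
qed

lemma integrable_exp_mart:
  assumes "l > 0" "k \<le> n"
  shows "integrable M (exp_mart l k)"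
proof (rule integrable_const_bound[where B="exp (k * (l * B))"])
  show "AE x in M. norm (exp_mart l k x) \<le> exp (k * (l * B))"
    using exp_mart_AE_le[OF assms] by (simp add: less_imp_le[OF exp_mart_pos])
qed (rule exp_mart_borel_measurable[OF assms(2)])

text \<open>The increment of \<open>exp_mart\<close> is dominated by a bounded predictable multiple of \<open>Z\<close>.\<close>
definition exp_mart_coeff :: "real \<Rightarrow> nat \<Rightarrow> 'a \<Rightarrow> real" where
  "exp_mart_coeff l k x =
     exp_mart l k x * exp (- ((l * Y (Suc k) x)\<^sup>2 / 2)) * chord_slope l (Y (Suc k) x)"

lemma exp_mart_Suc_le:
  assumes "l > 0" "Suc k \<le> n"
  shows "exp_mart_coeff l k \<in> borel_measurable (Fl (Suc k))"
    and "AE x in M. \<bar>exp_mart_coeff l k x\<bar> \<le> exp (k * (l * B)) * (l * exp (l * B))"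
    and "AE x in M. exp_mart l (Suc k) x \<le> exp_mart l k x + exp_mart_coeff l k x * Z (Suc k) x"
proof -
  have s: "Suc k \<in> {1..n}" and k: "k \<le> n" using assms by auto
  have [measurable]: "exp_mart l k \<in> borel_measurable (Fl (Suc k))" "Y (Suc k) \<in> borel_measurable (Fl (Suc k))"
    using exp_mart_measurable Y_measurable[OF s] assms by auto
  have [measurable]: "(sinh :: real \<Rightarrow> real) \<in> borel_measurable borel"
    by (intro borel_measurable_continuous_onI continuous_intros)
  show "exp_mart_coeff l k \<in> borel_measurable (Fl (Suc k))"
    unfolding exp_mart_coeff_def chord_slope_def by measurable
  show "AE x in M. \<bar>exp_mart_coeff l k x\<bar> \<le> exp (k * (l * B)) * (l * exp (l * B))"
    using exp_mart_AE_le[OF assms(1) k]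
  proof (elim AE_mp, intro AE_I2 impI)
    fix x assume x: "x \<in> space M" and le: "exp_mart l k x \<le> exp (k * (l * B))"
    have "\<bar>exp_mart_coeff l k x\<bar> = exp_mart l k x * exp (- ((l * Y (Suc k) x)\<^sup>2 / 2)) * \<bar>chord_slope l (Y (Suc k) x)\<bar>"
      using exp_mart_pos[of l k x] by (simp add: exp_mart_coeff_def abs_mult)
    also have "\<dots> \<le> exp (k * (l * B)) * 1 * (l * exp (l * B))"
      using le exp_mart_pos[of l k x] abs_chord_slope_le[of l] Y_bounded[OF s x] assms
      by (intro mult_mono) auto
    finally show "\<bar>exp_mart_coeff l k x\<bar> \<le> exp (k * (l * B)) * (l * exp (l * B))" by simp
  qed
  show "AE x in M. exp_mart l (Suc k) x \<le> exp_mart l k x + exp_mart_coeff l k x * Z (Suc k) x"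
    using Z_dominated[OF s]
  proof (elim AE_mp, intro AE_I2 impI)
    fix x assume "\<bar>Z (Suc k) x\<bar> \<le> Y (Suc k) x"
    from exp_sub_half_sq_le_linear[OF this, of l]
    have "exp_mart l k x * exp (l * Z (Suc k) x - (l * Y (Suc k) x)\<^sup>2 / 2)
        \<le> exp_mart l k x * (1 + exp (- ((l * Y (Suc k) x)\<^sup>2 / 2)) * chord_slope l (Y (Suc k) x) * Z (Suc k) x)"
      using exp_mart_pos[of l k x] by (intro mult_left_mono) auto
    moreover have "exp_mart l (Suc k) x = exp_mart l k x * exp (l * Z (Suc k) x - (l * Y (Suc k) x)\<^sup>2 / 2)"
      unfolding exp_mart_def by (simp add: exp_add[symmetric] algebra_simps)
    ultimately show "exp_mart l (Suc k) x \<le> exp_mart l k x + exp_mart_coeff l k x * Z (Suc k) x"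
      by (simp add: exp_mart_coeff_def algebra_simps)
  qed
qed

lemma integral_exp_mart_le_1:
  assumes "l > 0" "k \<le> n"
  shows "(\<integral>x. exp_mart l k x \<partial>M) \<le> 1"
  using assms(2)
proof (induction k)
  case 0 then show ?case by (simp add: exp_mart_def prob_space)
next
  case (Suc k)
  define H where "H = exp_mart_coeff l k"
  note H = exp_mart_Suc_le[OF assms(1) Suc.prems, folded H_def]
  have s: "Suc k \<in> {1..n}" using Suc.prems by auto
  have HZ_integrable: "integrable M (\<lambda>x. H x * Z (Suc k) x)"
  proof (rule integrable_const_bound[where B="exp (k * (l * B)) * (l * exp (l * B)) * B"])
    show "(\<lambda>x. H x * Z (Suc k) x) \<in> borel_measurable M"
      using measurable_from_subalg[OF subalgebra_Fl H(1)] Z_borel_measurable[OF s] by measurable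
    show "AE x in M. norm (H x * Z (Suc k) x) \<le> exp (k * (l * B)) * (l * exp (l * B)) * B"
      using H(2) Z_dominated[OF s]
    proof (rule AE_mp[OF _ AE_mp[OF _ AE_I2]], intro impI)
      fix x assume x: "x \<in> space M" and "\<bar>H x\<bar> \<le> exp (k * (l * B)) * (l * exp (l * B))"
        "\<bar>Z (Suc k) x\<bar> \<le> Y (Suc k) x"
      then show "norm (H x * Z (Suc k) x) \<le> exp (k * (l * B)) * (l * exp (l * B)) * B"
        using Y_bounded[OF s x] by (auto simp: abs_mult intro!: mult_mono)
    qed
  qed
  have k: "k \<le> n" using Suc.prems by simp
  have "(\<integral>x. exp_mart l (Suc k) x \<partial>M) \<le> (\<integral>x. exp_mart l k x + H x * Z (Suc k) x \<partial>M)"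
    using integrable_exp_mart[OF assms(1)] Suc.prems k HZ_integrable H(3) by (intro integral_mono_AE) auto
  also have "\<dots> = (\<integral>x. exp_mart l k x \<partial>M) + (\<integral>x. H x * Z (Suc k) x \<partial>M)"
    using integrable_exp_mart[OF assms(1) k] HZ_integrable by simp
  also have "\<dots> = (\<integral>x. exp_mart l k x \<partial>M)"
    using Z_orthogonal[OF s H(1) H(2)] by simp
  finally show ?case using Suc.IH[OF k] by simp
qed

lemma tail_bound:
  assumes l: "l > 0" and dl: "dl > 0"
  shows "prob {x \<in> space M. (\<Sum>s=1..n. Z s x) > l / 2 * (\<Sum>s=1..n. (Y s x)\<^sup>2) + ln (1 / dl) / l} \<le> dl"
proof -
  have "{x \<in> space M. (\<Sum>s=1..n. Z s x) > l / 2 * (\<Sum>s=1..n. (Y s x)\<^sup>2) + ln (1 / dl) / l}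
      \<subseteq> {x \<in> space M. exp_mart l n x \<ge> 1 / dl}"
  proof safe
    fix x assume "x \<in> space M" "(\<Sum>s=1..n. Z s x) > l / 2 * (\<Sum>s=1..n. (Y s x)\<^sup>2) + ln (1 / dl) / l"
    then have "ln (1 / dl) < l * (\<Sum>s=1..n. Z s x) - l\<^sup>2 / 2 * (\<Sum>s=1..n. (Y s x)\<^sup>2)"
      using l by (simp add: field_simps power2_eq_square)
    also have "\<dots> = (\<Sum>s=1..n. l * Z s x - (l * Y s x)\<^sup>2 / 2)"
      by (simp add: sum_subtractf sum_distrib_left sum_divide_distrib power_mult_distrib)
    finally have "exp (ln (1 / dl)) < exp_mart l n x" by (simp add: exp_mart_def)
    then show "1 / dl \<le> exp_mart l n x" using dl by simp
  qed
  then have "prob {x \<in> space M. (\<Sum>s=1..n. Z s x) > l / 2 * (\<Sum>s=1..n. (Y s x)\<^sup>2) + ln (1 / dl) / l}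
      \<le> prob {x \<in> space M. exp_mart l n x \<ge> 1 / dl}"
    using exp_mart_borel_measurable[OF order_refl] by (intro finite_measure_mono) measurable
  also have "\<dots> \<le> (\<integral>x. exp_mart l n x \<partial>M) / (1 / dl)"
    using integrable_exp_mart[OF l] exp_mart_pos dl
    by (intro integral_Markov_inequality_measure) (auto simp: less_imp_le)
  also have "\<dots> \<le> dl" using integral_exp_mart_le_1[OF l, of n] dl by (simp add: field_simps)
  finally show ?thesis .
qed

lemma AE_sum_Z_eq_0:
  assumes "\<And>s x. s \<in> {1..n} \<Longrightarrow> x \<in> space M \<Longrightarrow> Y s x = 0"
  shows "AE x in M. (\<Sum>s=1..n. Z s x) = 0"
proof -
  have "AE x in M. \<forall>s\<in>{1..n}. \<bar>Z s x\<bar> \<le> Y s x" by (intro AE_finite_allI) (auto intro!: Z_dominated)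
  then show ?thesis by (rule AE_mp[OF _ AE_I2]) (use assms in \<open>auto intro!: sum.neutral\<close>)
qed

lemma tail_bound_scaled_pos:
  assumes YR: "\<And>s x. s \<in> {1..n} \<Longrightarrow> x \<in> space M \<Longrightarrow> (Y s x)\<^sup>2 \<le> kap * R s x"
    and kap: "kap > 0" and mu: "mu > 0" and dl: "dl > 0"
  shows "prob {x \<in> space M. (\<Sum>s=1..n. Z s x) > mu * (\<Sum>s=1..n. R s x) + kap * ln (1 / dl) / (2 * mu)} \<le> dl"
proof -
  define l where "l = 2 * mu / kap"
  have l: "l > 0" unfolding l_def using kap mu by simp
  have "{x \<in> space M. (\<Sum>s=1..n. Z s x) > mu * (\<Sum>s=1..n. R s x) + kap * ln (1 / dl) / (2 * mu)}
      \<subseteq> {x \<in> space M. (\<Sum>s=1..n. Z s x) > l / 2 * (\<Sum>s=1..n. (Y s x)\<^sup>2) + ln (1 / dl) / l}"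
  proof safe
    fix x assume x: "x \<in> space M"
      and gt: "(\<Sum>s=1..n. Z s x) > mu * (\<Sum>s=1..n. R s x) + kap * ln (1 / dl) / (2 * mu)"
    have "l / 2 * (\<Sum>s=1..n. (Y s x)\<^sup>2) \<le> l / 2 * (\<Sum>s=1..n. kap * R s x)"
      using YR[OF _ x] l by (intro mult_left_mono sum_mono) auto
    also have "\<dots> = mu * (\<Sum>s=1..n. R s x)"
      unfolding l_def using kap by (simp add: sum_distrib_left[symmetric])
    moreover have "ln (1 / dl) / l = kap * ln (1 / dl) / (2 * mu)" using kap mu by (simp add: l_def)
    ultimately show "(\<Sum>s=1..n. Z s x) > l / 2 * (\<Sum>s=1..n. (Y s x)\<^sup>2) + ln (1 / dl) / l"
      using gt by linarith
  qed
  then have "prob {x \<in> space M. (\<Sum>s=1..n. Z s x) > mu * (\<Sum>s=1..n. R s x) + kap * ln (1 / dl) / (2 * mu)}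
      \<le> prob {x \<in> space M. (\<Sum>s=1..n. Z s x) > l / 2 * (\<Sum>s=1..n. (Y s x)\<^sup>2) + ln (1 / dl) / l}"
  proof (rule finite_measure_mono)
    have [measurable]: "Z s \<in> borel_measurable M" "Y s \<in> borel_measurable M" if "s \<in> {1..n}" for s
      using that by (auto intro: Z_borel_measurable Y_borel_measurable)
    show "{x \<in> space M. (\<Sum>s=1..n. Z s x) > l / 2 * (\<Sum>s=1..n. (Y s x)\<^sup>2) + ln (1 / dl) / l} \<in> sets M"
      by measurable
  qed
  also have "\<dots> \<le> dl" by (rule tail_bound[OF l dl])
  finally show ?thesis .
qed

lemma tail_bound_scaled:
  assumes YR: "\<And>s x. s \<in> {1..n} \<Longrightarrow> x \<in> space M \<Longrightarrow> (Y s x)\<^sup>2 \<le> kap * R s x"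
    and R_nonneg: "\<And>s x. s \<in> {1..n} \<Longrightarrow> x \<in> space M \<Longrightarrow> 0 \<le> R s x"
    and kap: "kap \<ge> 0" and mu: "mu > 0" and dl: "dl > 0"
  shows "prob {x \<in> space M. (\<Sum>s=1..n. Z s x) > mu * (\<Sum>s=1..n. R s x) + kap * ln (1 / dl) / (2 * mu)} \<le> dl"
proof (cases "kap = 0")
  case True
  have "AE x in M. (\<Sum>s=1..n. Z s x) = 0" using YR True by (intro AE_sum_Z_eq_0) simp
  then have "AE x in M. \<not> (\<Sum>s=1..n. Z s x) > mu * (\<Sum>s=1..n. R s x) + kap * ln (1 / dl) / (2 * mu)"
  proof (rule AE_mp[OF _ AE_I2], intro impI)
    fix x assume x: "x \<in> space M" and "(\<Sum>s=1..n. Z s x) = 0"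
    moreover have "0 \<le> mu * (\<Sum>s=1..n. R s x)"
      using mu R_nonneg[OF _ x] by (intro mult_nonneg_nonneg sum_nonneg) auto
    ultimately show "\<not> (\<Sum>s=1..n. Z s x) > mu * (\<Sum>s=1..n. R s x) + kap * ln (1 / dl) / (2 * mu)"
      using True by simp
  qed
  from prob_eq_0_AE[OF this] show ?thesis using dl by simp
next
  case False
  then show ?thesis using YR kap mu dl by (intro tail_bound_scaled_pos) auto
qed

end

section \<open>AdaSGD\<close>

locale adasgd = prob_space M for M :: "'a measure" +
  fixes f :: "'d::euclidean_space \<Rightarrow> real" and G :: "'d \<Rightarrow> 'd"
    and g :: "nat \<Rightarrow> 'a \<Rightarrow> 'd"
    and w1 :: 'd and beta fstar eta gamma sigma0 sigma1 :: real and T :: nat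
  assumes grad: "\<And>x. (f has_derivative (\<lambda>h. G x \<bullet> h)) (at x)"
    and smooth: "\<And>x y. norm (G x - G y) \<le> beta * norm (x - y)"
    and fmin: "\<And>x. fstar \<le> f x"
    and eta: "eta > 0" and gamma: "gamma > 0"
    and sig0: "sigma0 \<ge> 0" and sig1: "sigma1 \<ge> 0"
    and meas: "\<And>t. g t \<in> borel_measurable M"
    and unbiased: "\<And>t v. t \<in> {1..T} \<Longrightarrow>
       AE x in M. real_cond_exp M (nat_filt M g t) (\<lambda>x. g t x \<bullet> v) x
                  = G (ada_w w1 eta gamma g t x) \<bullet> v"
    and noise: "\<And>t. t \<in> {1..T} \<Longrightarrow>
       AE x in M. (norm (g t x - G (ada_w w1 eta gamma g t x)))\<^sup>2
                  \<le> sigma0\<^sup>2 + sigma1\<^sup>2 * (norm (G (ada_w w1 eta gamma g t x)))\<^sup>2"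
begin

abbreviation "w \<equiv> ada_w w1 eta gamma g"
abbreviation "Fl \<equiv> nat_filt M g"

lemma beta_nonneg: "beta \<ge> 0"
  using lipschitz_bound_nonneg[OF smooth] .

definition acc_sq :: "nat \<Rightarrow> 'a \<Rightarrow> real" where
  "acc_sq t x = gamma\<^sup>2 + (\<Sum>s=1..t. (norm (g s x))\<^sup>2)"

lemma w_Suc: "t \<ge> 1 \<Longrightarrow> w (Suc t) x = w t x - (eta / sqrt (acc_sq t x)) *\<^sub>R g t x"
  by (simp add: acc_sq_def)

lemma acc_sq_pos: "acc_sq t x > 0"
  unfolding acc_sq_def using gamma by (intro add_pos_nonneg sum_nonneg) auto

lemma acc_sq_Suc: "acc_sq (Suc t) x = acc_sq t x + (norm (g (Suc t) x))\<^sup>2"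
  by (simp add: acc_sq_def)

lemma norm_sq_le_acc_sq: "t \<ge> 1 \<Longrightarrow> (norm (g t x))\<^sup>2 \<le> acc_sq t x"
  unfolding acc_sq_def using member_le_sum[of t "{1..t}" "\<lambda>s. (norm (g s x))\<^sup>2"]
  by (simp add: add_increasing)

lemma norm_w_Suc_diff_le: "t \<ge> 1 \<Longrightarrow> norm (w (Suc t) x - w t x) \<le> eta"
proof -
  assume t: "t \<ge> 1"
  have "norm (g t x) \<le> sqrt (acc_sq t x)" using norm_sq_le_acc_sq[OF t] by (simp add: real_le_rsqrt)
  then have "eta / sqrt (acc_sq t x) * norm (g t x) \<le> eta / sqrt (acc_sq t x) * sqrt (acc_sq t x)"
    using eta acc_sq_pos[of t x] by (intro mult_left_mono) auto
  then show ?thesis using w_Suc[OF t] eta acc_sq_pos[of t x] by simp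
qed

lemma norm_w_diff_w1_le: "t \<ge> 1 \<Longrightarrow> norm (w t x - w1) \<le> eta * (real t - 1)"
proof (induction t rule: dec_induct)
  case (step t)
  have "norm (w (Suc t) x - w1) \<le> norm (w (Suc t) x - w t x) + norm (w t x - w1)"
    using norm_triangle_ineq[of "w (Suc t) x - w t x" "w t x - w1"] by simp
  then show ?case using norm_w_Suc_diff_le[OF step.hyps(1), of x] step.IH by (simp add: algebra_simps)
qed simp

definition grad_max :: real where
  "grad_max = norm (G w1) + beta * eta * T"

lemma grad_max_nonneg: "grad_max \<ge> 0"
  unfolding grad_max_def using beta_nonneg eta by simp

lemma norm_grad_le_grad_max: "t \<in> {1..T} \<Longrightarrow> norm (G (w t x)) \<le> grad_max"
proof -
  assume t: "t \<in> {1..T}"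
  have "norm (G (w t x)) \<le> norm (G w1) + norm (G (w t x) - G w1)"
    by (metis add.commute diff_add_cancel norm_triangle_ineq)
  also have "norm (G (w t x) - G w1) \<le> beta * (eta * (real t - 1))"
    using smooth[of "w t x" w1] norm_w_diff_w1_le[of t x] t beta_nonneg
    by (meson atLeastAtMost_iff mult_left_mono order_trans)
  also have "eta * (real t - 1) \<le> eta * T" using t eta by (intro mult_left_mono) auto
  finally show ?thesis unfolding grad_max_def using beta_nonneg by (simp add: mult_left_mono)
qed

lemma norm_grad_sq_le:
  assumes "s \<in> {1..T}"
  shows "(norm (G (w s x)))\<^sup>2 \<le> 4 * beta * (f w1 - fstar) + 2 * beta\<^sup>2 * eta\<^sup>2 * T\<^sup>2"
proof -
  have "(norm (G (w s x)))\<^sup>2 \<le> (norm (G w1) + beta * eta * T)\<^sup>2"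
    using norm_grad_le_grad_max[OF assms] by (intro power_mono) (auto simp: grad_max_def)
  also have "\<dots> \<le> 2 * (norm (G w1))\<^sup>2 + 2 * (beta * eta * T)\<^sup>2"
    using sum_squares_ge_zero[of "norm (G w1) - beta * eta * T" 0]
    by (simp add: power2_eq_square algebra_simps)
  also have "\<dots> \<le> 4 * beta * (f w1 - fstar) + 2 * beta\<^sup>2 * eta\<^sup>2 * T\<^sup>2"
    using norm_grad_sq_le_suboptimality[OF grad smooth fmin, of w1] by (simp add: power_mult_distrib)
  finally show ?thesis .
qed

lemma acc_sq_le:
  assumes noise_x: "\<forall>s\<in>{1..T}. (norm (g s x - G (w s x)))\<^sup>2 \<le> sigma0\<^sup>2 + sigma1\<^sup>2 * (norm (G (w s x)))\<^sup>2"
    and t: "t \<le> T"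
  shows "acc_sq t x \<le> gamma\<^sup>2 + (2 * sigma0\<^sup>2 * T + 8 * (1 + sigma1\<^sup>2) * (eta\<^sup>2 * beta\<^sup>2 * T ^ 3 + beta * (f w1 - fstar) * T))"
proof -
  define K where "K = 2 * sigma0\<^sup>2 + 2 * (1 + sigma1\<^sup>2) * (4 * beta * (f w1 - fstar) + 2 * beta\<^sup>2 * eta\<^sup>2 * T\<^sup>2)"
  have D1: "f w1 - fstar \<ge> 0" using fmin[of w1] by simp
  have "(norm (g s x))\<^sup>2 \<le> K" if s: "s \<in> {1..T}" for s
  proof -
    have "norm (g s x) \<le> norm (G (w s x)) + norm (g s x - G (w s x))"
      using norm_triangle_ineq[of "G (w s x)" "g s x - G (w s x)"] by simp
    then have "(norm (g s x))\<^sup>2 \<le> (norm (G (w s x)) + norm (g s x - G (w s x)))\<^sup>2"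
      by (intro power_mono) auto
    also have "\<dots> \<le> 2 * (norm (G (w s x)))\<^sup>2 + 2 * (norm (g s x - G (w s x)))\<^sup>2"
      using sum_squares_ge_zero[of "norm (G (w s x)) - norm (g s x - G (w s x))" 0]
      by (simp add: power2_eq_square algebra_simps)
    also have "\<dots> \<le> 2 * sigma0\<^sup>2 + 2 * (1 + sigma1\<^sup>2) * (norm (G (w s x)))\<^sup>2"
      using bspec[OF noise_x s] by (simp add: algebra_simps)
    also have "\<dots> \<le> K"
      unfolding K_def using norm_grad_sq_le[OF s] by (intro add_left_mono mult_left_mono) auto
    finally show ?thesis .
  qed
  then have "(\<Sum>s=1..t. (norm (g s x))\<^sup>2) \<le> (\<Sum>s=1..t. K)" using t by (intro sum_mono) auto
  also have "\<dots> \<le> T * K" using t beta_nonneg D1 by (auto simp: K_def intro!: mult_right_mono)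
  also have "\<dots> \<le> 2 * sigma0\<^sup>2 * T + 8 * (1 + sigma1\<^sup>2) * (eta\<^sup>2 * beta\<^sup>2 * T ^ 3 + beta * (f w1 - fstar) * T)"
  proof -
    have "T * K = 2 * sigma0\<^sup>2 * T + (1 + sigma1\<^sup>2) * (8 * (beta * (f w1 - fstar) * T) + 4 * (eta\<^sup>2 * beta\<^sup>2 * T ^ 3))"
      unfolding K_def by (simp add: algebra_simps power2_eq_square power3_eq_cube)
    also have "\<dots> \<le> 2 * sigma0\<^sup>2 * T + (1 + sigma1\<^sup>2) * (8 * (beta * (f w1 - fstar) * T) + 8 * (eta\<^sup>2 * beta\<^sup>2 * T ^ 3))"
      using beta_nonneg D1 by (intro add_left_mono mult_left_mono) auto
    finally show ?thesis by (simp add: algebra_simps)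
  qed
  finally show ?thesis unfolding acc_sq_def by simp
qed

lemma f_w_Suc_le:
  assumes "s \<ge> 1"
  shows "f (w (Suc s) x) \<le> f (w s x) - (eta / sqrt (acc_sq s x)) * (G (w s x) \<bullet> g s x)
    + beta / 2 * eta\<^sup>2 * ((norm (g s x))\<^sup>2 / acc_sq s x)"
proof -
  have "f (w (Suc s) x) \<le> f (w s x) + G (w s x) \<bullet> (w (Suc s) x - w s x) + beta / 2 * (norm (w (Suc s) x - w s x))\<^sup>2"
    by (rule descent_lemma[OF grad smooth])
  then show ?thesis
    using w_Suc[OF assms, of x] eta acc_sq_pos[of s x]
    by (simp add: power_mult_distrib power_divide abs_of_nonneg)
qed

lemma f_w_Suc_le_sum:
  "t \<ge> 1 \<Longrightarrow> f (w (Suc t) x) \<le> f w1 + (\<Sum>s=1..t. - (eta / sqrt (acc_sq s x)) * (G (w s x) \<bullet> g s x)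
      + beta / 2 * eta\<^sup>2 * ((norm (g s x))\<^sup>2 / acc_sq s x))"
proof (induction t rule: dec_induct)
  case base then show ?case using f_w_Suc_le[of 1 x] by simp
next
  case (step t) then show ?case using f_w_Suc_le[of "Suc t" x] by simp
qed

lemma f_borel_measurable[measurable]: "f \<in> borel_measurable borel"
  using grad by (intro borel_measurable_continuous_onI continuous_at_imp_continuous_on)
    (auto intro: has_derivative_continuous)

lemma G_borel_measurable[measurable]: "G \<in> borel_measurable borel"
proof -
  have "beta-lipschitz_on UNIV G" using smooth beta_nonneg by (auto simp: lipschitz_on_def dist_norm)
  then show ?thesis by (intro borel_measurable_continuous_onI lipschitz_on_continuous_on)
qed

lemma sets_Fl: "sets (Fl t) = sigma_sets (space M) (\<Union>s\<in>{1..<t}. {g s -` B \<inter> space M | B. B \<in> sets borel})"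
  unfolding nat_filt_def by (rule sets_measure_of) auto

lemma space_Fl[simp]: "space (Fl t) = space M"
  unfolding nat_filt_def by (simp add: space_measure_of_conv)

lemma subalgebra_Fl: "subalgebra M (Fl t)"
  unfolding subalgebra_def sets_Fl
  using meas by (auto intro!: sets.sigma_sets_subset simp: measurable_def)

lemma subalgebra_Fl_Suc: "subalgebra (Fl (Suc t)) (Fl t)"
proof -
  have "(\<Union>s\<in>{1..<t}. {g s -` B \<inter> space M | B. B \<in> sets borel})
      \<subseteq> (\<Union>s\<in>{1..<Suc t}. {g s -` B \<inter> space M | B. B \<in> sets borel})"
    by (intro UN_mono) auto
  then show ?thesis unfolding subalgebra_def sets_Fl by (simp add: sigma_sets_subseteq)
qed

lemma g_measurable_Fl: "1 \<le> s \<Longrightarrow> s < t \<Longrightarrow> g s \<in> borel_measurable (Fl t)"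
proof (rule measurableI)
  fix A :: "'d set" assume "1 \<le> s" "s < t" "A \<in> sets borel"
  then have "g s -` A \<inter> space M \<in> (\<Union>s\<in>{1..<t}. {g s -` B \<inter> space M | B. B \<in> sets borel})"
    by (intro UN_I[of s]) auto
  then show "g s -` A \<inter> space (Fl t) \<in> sets (Fl t)" unfolding sets_Fl by (auto intro: sigma_sets.Basic)
qed auto

lemma w_measurable_Fl: "t \<ge> 1 \<Longrightarrow> w t \<in> borel_measurable (Fl t)"
proof (induction t rule: dec_induct)
  case base then show ?case by simp
next
  case (step t)
  have [measurable]: "w t \<in> borel_measurable (Fl (Suc t))"
    using measurable_from_subalg[OF subalgebra_Fl_Suc step.IH] .
  have [measurable]: "g s \<in> borel_measurable (Fl (Suc t))" if "s \<in> {1..t}" for s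
    using g_measurable_Fl[of s "Suc t"] that by auto
  have [measurable]: "g t \<in> borel_measurable (Fl (Suc t))"
    using g_measurable_Fl[of t "Suc t"] step.hyps by auto
  have "(\<lambda>x. w t x - (eta / sqrt (gamma\<^sup>2 + (\<Sum>s=1..t. (norm (g s x))\<^sup>2))) *\<^sub>R g t x) \<in> borel_measurable (Fl (Suc t))"
    using step.hyps by measurable
  then show ?case using step.hyps by simp
qed

lemma w_borel_measurable[measurable]: "w t \<in> borel_measurable M"
proof (cases "t = 0")
  case True
  then have "w t = (\<lambda>x. w1)" by auto
  then show ?thesis by simp
qed (use measurable_from_subalg[OF subalgebra_Fl w_measurable_Fl[of t]] in simp)

lemma acc_sq_measurable_Fl: "t \<ge> 1 \<Longrightarrow> acc_sq (t - 1) \<in> borel_measurable (Fl t)"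
proof -
  assume t: "t \<ge> 1"
  have [measurable]: "g s \<in> borel_measurable (Fl t)" if "s \<in> {1..t-1}" for s
    using g_measurable_Fl[of s t] that t by auto
  show ?thesis unfolding acc_sq_def by measurable
qed

lemma sets_sum_inner_noise_le:
  "{x \<in> space M. (\<Sum>t=1..T. G (w t x) \<bullet> (G (w t x) - g t x)) \<le> 1/4 * (\<Sum>t=1..T. (norm (G (w t x)))\<^sup>2) + c}
     \<in> sets M"
  using meas by measurable

definition noise_level :: "nat \<Rightarrow> 'a \<Rightarrow> real" where
  "noise_level t x = sqrt (sigma0\<^sup>2 + sigma1\<^sup>2 * (norm (G (w t x)))\<^sup>2)"

definition noise_max :: real where
  "noise_max = sqrt (sigma0\<^sup>2 + sigma1\<^sup>2 * grad_max\<^sup>2)"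

lemma noise_level_nonneg: "noise_level t x \<ge> 0"
  by (simp add: noise_level_def)

lemma noise_level_le_max: "t \<in> {1..T} \<Longrightarrow> noise_level t x \<le> noise_max"
  unfolding noise_level_def noise_max_def
  using norm_grad_le_grad_max[of t x] by (auto intro!: mult_left_mono power_mono)

lemma noise_level_measurable_Fl: "t \<ge> 1 \<Longrightarrow> noise_level t \<in> borel_measurable (Fl t)"
  using w_measurable_Fl unfolding noise_level_def by measurable

lemma norm_noise_le: "t \<in> {1..T} \<Longrightarrow> AE x in M. norm (g t x - G (w t x)) \<le> noise_level t x"
  using noise by (rule AE_mp[OF _ AE_I2]) (auto simp: noise_level_def intro: real_le_rsqrt)

lemma inner_noise_le:
  assumes "t \<in> {1..T}"
  shows "AE x in M. \<bar>G (w t x) \<bullet> (g t x - G (w t x))\<bar> \<le> norm (G (w t x)) * noise_level t x"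
  using norm_noise_le[OF assms]
proof (rule AE_mp[OF _ AE_I2], intro impI)
  fix x assume "norm (g t x - G (w t x)) \<le> noise_level t x"
  then have "norm (G (w t x)) * norm (g t x - G (w t x)) \<le> norm (G (w t x)) * noise_level t x"
    by (intro mult_left_mono) auto
  then show "\<bar>G (w t x) \<bullet> (g t x - G (w t x))\<bar> \<le> norm (G (w t x)) * noise_level t x"
    using Cauchy_Schwarz_ineq2 order_trans by blast
qed

lemma noise_orthogonal:
  assumes s: "s \<in> {1..T}" and a: "a \<in> borel_measurable (Fl s)" "AE x in M. \<bar>a x\<bar> \<le> C"
  shows "(\<integral>x. a x * (G (w s x) \<bullet> (g s x - G (w s x))) \<partial>M) = 0"
proof -
  have bound: "AE x in M. norm (g s x) \<le> grad_max + noise_max"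
    using norm_noise_le[OF s]
  proof (rule AE_mp[OF _ AE_I2], intro impI)
    fix x assume "norm (g s x - G (w s x)) \<le> noise_level s x"
    then show "norm (g s x) \<le> grad_max + noise_max"
      using norm_triangle_ineq[of "G (w s x)" "g s x - G (w s x)"]
        norm_grad_le_grad_max[OF s, of x] noise_level_le_max[OF s, of x] by simp
  qed
  have "(\<integral>x. (a x *\<^sub>R G (w s x)) \<bullet> (g s x - G (w s x)) \<partial>M) = 0"
  proof (rule integral_inner_cond_exp_diff_eq_0[OF subalgebra_Fl])
    have [measurable]: "w s \<in> borel_measurable (Fl s)" using w_measurable_Fl s by simp
    show "(\<lambda>x. a x *\<^sub>R G (w s x)) \<in> borel_measurable (Fl s)"
      using a(1) by measurable
    show "AE x in M. norm (a x *\<^sub>R G (w s x)) \<le> C * grad_max"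
      using a(2) by (rule AE_mp[OF _ AE_I2])
        (auto intro!: mult_mono norm_grad_le_grad_max[OF s] simp: grad_max_nonneg)
    show "AE x in M. norm (G (w s x)) \<le> grad_max + noise_max"
      using norm_grad_le_grad_max[OF s] by (intro AE_I2) (simp add: noise_max_def add_increasing2)
  qed (use bound meas unbiased[OF s] in auto)
  then show ?thesis by (simp add: algebra_simps)
qed

end

section \<open>The two high-probability bounds\<close>

locale adasgd_conf = adasgd +
  fixes delta :: real
  assumes delta: "0 < delta" "delta < 1"
begin

definition Delta1 :: real where
  "Delta1 = f w1 - fstar"

definition C1 :: real where
  "C1 = log 2 (1 + (2 * sigma0\<^sup>2 * T + 8 * (1 + sigma1\<^sup>2) * (eta\<^sup>2 * beta\<^sup>2 * T ^ 3 + beta * Delta1 * T)) / gamma\<^sup>2)"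

definition log_T_delta :: real where
  "log_T_delta = log 2 (T / delta)"

definition F_bound :: real where
  "F_bound = 2 * Delta1 + (3 * log_T_delta + 4 * C1) * eta * sigma0
     + (9 * log_T_delta\<^sup>2 + 16 * C1\<^sup>2) * eta\<^sup>2 * beta * sigma1\<^sup>2 + eta\<^sup>2 * beta * C1"

lemma Delta1_nonneg: "Delta1 \<ge> 0"
  unfolding Delta1_def using fmin[of w1] by simp

lemma C1_nonneg: "C1 \<ge> 0"
proof -
  have "0 \<le> (2 * sigma0\<^sup>2 * T + 8 * (1 + sigma1\<^sup>2) * (eta\<^sup>2 * beta\<^sup>2 * T ^ 3 + beta * Delta1 * T)) / gamma\<^sup>2"
    using Delta1_nonneg beta_nonneg by simp
  then show ?thesis unfolding C1_def by simp
qed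

lemma log_T_delta_nonneg: "log_T_delta \<ge> 0"
proof (cases "T = 0")
  case True then show ?thesis unfolding log_T_delta_def by (simp add: log_def)
next
  case False
  then have "real T / delta \<ge> 1" using delta by (simp add: field_simps)
  then show ?thesis unfolding log_T_delta_def by simp
qed

lemma F_bound_ge: "F_bound \<ge> 2 * Delta1"
  unfolding F_bound_def using log_T_delta_nonneg C1_nonneg eta beta_nonneg sig0 sig1 by simp

lemma F_bound_nonneg: "F_bound \<ge> 0"
  using F_bound_ge Delta1_nonneg by simp

lemma sum_sq_ratio_le_C1:
  assumes noise_x: "\<forall>s\<in>{1..T}. (norm (g s x - G (w s x)))\<^sup>2 \<le> sigma0\<^sup>2 + sigma1\<^sup>2 * (norm (G (w s x)))\<^sup>2"
    and t: "t \<le> T"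
  shows "(\<Sum>s=1..t. (norm (g s x))\<^sup>2 / acc_sq s x) \<le> ln 2 * C1"
proof -
  have "(\<Sum>s=1..t. (norm (g s x))\<^sup>2 / acc_sq s x) \<le> ln (acc_sq t x / gamma\<^sup>2)"
    unfolding acc_sq_def using gamma by (intro sum_div_partial_sums_le_ln) auto
  also have "\<dots> \<le> ln (1 + (2 * sigma0\<^sup>2 * T + 8 * (1 + sigma1\<^sup>2) * (eta\<^sup>2 * beta\<^sup>2 * T ^ 3 + beta * Delta1 * T)) / gamma\<^sup>2)"
    using acc_sq_le[OF noise_x t] acc_sq_pos[of t x] gamma
    by (intro ln_mono) (auto simp: Delta1_def field_simps)
  also have "\<dots> = ln 2 * C1" by (simp add: C1_def log_def)
  finally show ?thesis .
qed

text \<open>Truncating by this indicator keeps all noise terms below under control: where it is \<open>1\<close>,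
  \<open>\<parallel>G (w t x)\<parallel>\<^sup>2 \<le> 2 beta F_bound\<close>.\<close>
definition on_track :: "nat \<Rightarrow> 'a \<Rightarrow> real" where
  "on_track t x = (if f (w t x) - fstar \<le> F_bound then 1 else 0)"

definition noise_var_bound :: real where
  "noise_var_bound = sigma0\<^sup>2 + 2 * beta * sigma1\<^sup>2 * F_bound"

definition noise_bound :: real where
  "noise_bound = sigma0 + sigma1 * sqrt (2 * beta * F_bound)"

lemma on_track_cases: "on_track t x = 0 \<or> on_track t x = 1"
  by (simp add: on_track_def)

lemma noise_var_bound_nonneg: "noise_var_bound \<ge> 0"
  unfolding noise_var_bound_def using beta_nonneg F_bound_nonneg by simp

lemma noise_bound_nonneg: "noise_bound \<ge> 0"
  unfolding noise_bound_def using sig0 sig1 beta_nonneg F_bound_nonneg by simp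

lemma noise_level_sq_le_on_track: "on_track t x = 1 \<Longrightarrow> (noise_level t x)\<^sup>2 \<le> noise_var_bound"
proof -
  assume "on_track t x = 1"
  then have "f (w t x) - fstar \<le> F_bound" by (simp add: on_track_def split: if_splits)
  then have "2 * beta * (f (w t x) - fstar) \<le> 2 * beta * F_bound"
    using beta_nonneg by (intro mult_left_mono) auto
  then have "(norm (G (w t x)))\<^sup>2 \<le> 2 * beta * F_bound"
    using norm_grad_sq_le_suboptimality[OF grad smooth fmin, of "w t x"] by linarith
  then have "sigma1\<^sup>2 * (norm (G (w t x)))\<^sup>2 \<le> sigma1\<^sup>2 * (2 * beta * F_bound)"
    by (intro mult_left_mono) auto
  then show ?thesis
    unfolding noise_level_def noise_var_bound_def by (simp add: algebra_simps)
qed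

lemma noise_level_le_on_track: "on_track t x = 1 \<Longrightarrow> noise_level t x \<le> noise_bound"
proof -
  assume "on_track t x = 1"
  then have "(noise_level t x)\<^sup>2 \<le> sigma0\<^sup>2 + sigma1\<^sup>2 * (sqrt (2 * beta * F_bound))\<^sup>2"
    using noise_level_sq_le_on_track beta_nonneg F_bound_nonneg
    by (simp add: noise_var_bound_def algebra_simps)
  also have "\<dots> \<le> noise_bound\<^sup>2"
    unfolding noise_bound_def power2_sum using sig0 sig1 beta_nonneg F_bound_nonneg
    by (simp add: power_mult_distrib)
  finally show ?thesis using noise_bound_nonneg by (simp add: power2_le_iff_abs_le)
qed

text \<open>The decorrelated step size is \<open>eta / dec_denom t\<close>: unlike the actual step size, it is
  \<open>Fl t\<close>-measurable, so it does not see the current stochastic gradient \<open>g t\<close>.\<close>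
definition dec_denom :: "nat \<Rightarrow> 'a \<Rightarrow> real" where
  "dec_denom t x = sqrt (acc_sq (t - 1) x + (norm (G (w t x)))\<^sup>2 + (noise_level t x)\<^sup>2)"

lemma dec_denom_ge_gamma: "dec_denom t x \<ge> gamma"
proof -
  have "gamma\<^sup>2 \<le> acc_sq (t - 1) x + (norm (G (w t x)))\<^sup>2 + (noise_level t x)\<^sup>2"
    unfolding acc_sq_def by (simp add: add_increasing2 sum_nonneg)
  then show ?thesis unfolding dec_denom_def using gamma by (simp add: real_le_rsqrt)
qed

lemma dec_denom_pos: "dec_denom t x > 0"
  using dec_denom_ge_gamma[of t x] gamma by linarith

lemma eta_div_dec_denom_le: "0 \<le> eta / dec_denom t x \<and> eta / dec_denom t x \<le> eta / gamma"
  using dec_denom_pos[of t x] dec_denom_ge_gamma[of t x] eta gamma by (auto intro: divide_left_mono)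

lemma noise_level_le_dec_denom: "noise_level t x \<le> dec_denom t x"
  unfolding dec_denom_def using acc_sq_pos[of "t - 1" x] by (intro real_le_rsqrt) auto

lemma on_track_measurable_Fl: "t \<ge> 1 \<Longrightarrow> on_track t \<in> borel_measurable (Fl t)"
  using w_measurable_Fl unfolding on_track_def by measurable

lemma dec_denom_measurable_Fl: "t \<ge> 1 \<Longrightarrow> dec_denom t \<in> borel_measurable (Fl t)"
  using w_measurable_Fl acc_sq_measurable_Fl noise_level_measurable_Fl
  unfolding dec_denom_def by measurable

definition grad_noise :: "nat \<Rightarrow> 'a \<Rightarrow> real" where
  "grad_noise t x = on_track t x * (G (w t x) \<bullet> (G (w t x) - g t x))"

definition grad_noise_dom :: "nat \<Rightarrow> 'a \<Rightarrow> real" where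
  "grad_noise_dom t x = on_track t x * norm (G (w t x)) * noise_level t x"

lemma grad_noise_measurable_Fl: "t \<ge> 1 \<Longrightarrow> grad_noise t \<in> borel_measurable (Fl (Suc t))"
proof -
  assume t: "t \<ge> 1"
  have [measurable]: "g t \<in> borel_measurable (Fl (Suc t))" using g_measurable_Fl[of t "Suc t"] t by simp
  have [measurable]: "w t \<in> borel_measurable (Fl (Suc t))" "on_track t \<in> borel_measurable (Fl (Suc t))"
    using measurable_from_subalg[OF subalgebra_Fl_Suc] w_measurable_Fl[OF t] on_track_measurable_Fl[OF t]
    by blast+
  show ?thesis unfolding grad_noise_def by measurable
qed

lemma grad_noise_dom_measurable_Fl: "t \<ge> 1 \<Longrightarrow> grad_noise_dom t \<in> borel_measurable (Fl t)"
  using w_measurable_Fl on_track_measurable_Fl noise_level_measurable_Fl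
  unfolding grad_noise_dom_def by measurable

lemma grad_noise_borel_measurable: "t \<ge> 1 \<Longrightarrow> grad_noise t \<in> borel_measurable M"
  using measurable_from_subalg[OF subalgebra_Fl grad_noise_measurable_Fl] .

lemma sum_inner_eq_sum_grad_noise:
  assumes "\<forall>t\<in>{1..T}. f (w t x) - fstar \<le> F_bound"
  shows "(\<Sum>t=1..T. G (w t x) \<bullet> (G (w t x) - g t x)) = (\<Sum>t=1..T. grad_noise t x)"
  using assms by (intro sum.cong) (auto simp: grad_noise_def on_track_def)

lemma descent_noise_borel_measurable:
  "t \<ge> 1 \<Longrightarrow> (\<lambda>x. eta / dec_denom t x * grad_noise t x) \<in> borel_measurable M"
  using grad_noise_borel_measurable measurable_from_subalg[OF subalgebra_Fl dec_denom_measurable_Fl]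
  by measurable

lemma grad_noise_dom_nonneg: "grad_noise_dom t x \<ge> 0"
  using on_track_cases[of t x] noise_level_nonneg[of t x] by (auto simp: grad_noise_dom_def)

lemma grad_noise_dom_le: "t \<in> {1..T} \<Longrightarrow> grad_noise_dom t x \<le> grad_max * noise_max"
proof -
  assume t: "t \<in> {1..T}"
  have "norm (G (w t x)) * noise_level t x \<le> grad_max * noise_max"
    using norm_grad_le_grad_max[OF t] noise_level_le_max[OF t] noise_level_nonneg grad_max_nonneg
    by (intro mult_mono) auto
  moreover have "0 \<le> grad_max * noise_max"
    using grad_max_nonneg by (simp add: noise_max_def)
  ultimately show ?thesis using on_track_cases[of t x] by (auto simp: grad_noise_dom_def)
qed

lemma grad_noise_dominated:
  assumes t: "t \<in> {1..T}"
  shows "AE x in M. \<bar>grad_noise t x\<bar> \<le> grad_noise_dom t x"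
  using inner_noise_le[OF t]
proof (rule AE_mp[OF _ AE_I2], intro impI)
  fix x assume "\<bar>G (w t x) \<bullet> (g t x - G (w t x))\<bar> \<le> norm (G (w t x)) * noise_level t x"
  moreover have "\<bar>G (w t x) \<bullet> (G (w t x) - g t x)\<bar> = \<bar>G (w t x) \<bullet> (g t x - G (w t x))\<bar>"
    by (simp add: inner_diff_right)
  ultimately show "\<bar>grad_noise t x\<bar> \<le> grad_noise_dom t x"
    using on_track_cases[of t x] by (auto simp: grad_noise_def grad_noise_dom_def)
qed

lemma grad_noise_orthogonal:
  assumes t: "t \<in> {1..T}" and a: "a \<in> borel_measurable (Fl t)" "AE x in M. \<bar>a x\<bar> \<le> C"
  shows "(\<integral>x. a x * grad_noise t x \<partial>M) = 0"
proof -
  have "(\<integral>x. - (a x * on_track t x) * (G (w t x) \<bullet> (g t x - G (w t x))) \<partial>M) = 0"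
  proof (rule noise_orthogonal[OF t])
    have [measurable]: "on_track t \<in> borel_measurable (Fl t)" using on_track_measurable_Fl t by simp
    show "(\<lambda>x. - (a x * on_track t x)) \<in> borel_measurable (Fl t)"
      using a(1) by measurable
    show "AE x in M. \<bar>- (a x * on_track t x)\<bar> \<le> C"
      using a(2)
    proof (rule AE_mp[OF _ AE_I2], intro impI)
      fix x assume "\<bar>a x\<bar> \<le> C"
      then show "\<bar>- (a x * on_track t x)\<bar> \<le> C" using on_track_cases[of t x] by auto
    qed
  qed
  then show ?thesis by (simp add: grad_noise_def inner_diff_right algebra_simps)
qed

lemma dominated_mds_grad_noise:
  assumes c_measurable: "\<And>s. s \<ge> 1 \<Longrightarrow> c s \<in> borel_measurable (Fl s)"
    and c_bounded: "\<And>s x. 0 \<le> c s x \<and> c s x \<le> cb" and n: "n \<le> T"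
  shows "dominated_mds M Fl (\<lambda>s x. c s x * grad_noise s x) (\<lambda>s x. c s x * grad_noise_dom s x)
           (cb * (grad_max * noise_max)) n"
proof unfold_locales
  fix s assume s: "s \<in> {1..n}"
  then have sT: "s \<in> {1..T}" using n by auto
  have [measurable]: "c s \<in> borel_measurable (Fl s)" "c s \<in> borel_measurable (Fl (Suc s))"
    "grad_noise s \<in> borel_measurable (Fl (Suc s))" "grad_noise_dom s \<in> borel_measurable (Fl s)"
    using c_measurable measurable_from_subalg[OF subalgebra_Fl_Suc c_measurable]
      grad_noise_measurable_Fl grad_noise_dom_measurable_Fl s by auto
  show "(\<lambda>x. c s x * grad_noise s x) \<in> borel_measurable (Fl (Suc s))" by measurable
  show "(\<lambda>x. c s x * grad_noise_dom s x) \<in> borel_measurable (Fl s)" by measurable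
  show "0 \<le> c s x * grad_noise_dom s x \<and> c s x * grad_noise_dom s x \<le> cb * (grad_max * noise_max)" for x
    using c_bounded[of s x] grad_noise_dom_nonneg[of s x] grad_noise_dom_le[OF sT, of x]
    by (auto intro!: mult_mono)
  show "AE x in M. \<bar>c s x * grad_noise s x\<bar> \<le> c s x * grad_noise_dom s x"
    using grad_noise_dominated[OF sT]
    by (rule AE_mp[OF _ AE_I2]) (use c_bounded[of s] in \<open>auto simp: abs_mult intro!: mult_left_mono\<close>)
  fix h :: "'a \<Rightarrow> real" and C :: real
  assume h: "h \<in> borel_measurable (Fl s)" "AE x in M. \<bar>h x\<bar> \<le> C"
  have "(\<integral>x. (h x * c s x) * grad_noise s x \<partial>M) = 0"
  proof (rule grad_noise_orthogonal[OF sT])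
    show "(\<lambda>x. h x * c s x) \<in> borel_measurable (Fl s)" using h(1) by measurable
    show "AE x in M. \<bar>h x * c s x\<bar> \<le> C * cb"
      using h(2) by (rule AE_mp[OF _ AE_I2]) (use c_bounded[of s] in \<open>auto simp: abs_mult intro!: mult_mono\<close>)
  qed
  then show "(\<integral>x. h x * (c s x * grad_noise s x) \<partial>M) = 0" by (simp add: mult.assoc)
qed (use subalgebra_Fl subalgebra_Fl_Suc in auto)

lemma grad_noise_tail:
  "prob {x \<in> space M. (\<Sum>s=1..T. grad_noise s x)
           > 1/4 * (\<Sum>s=1..T. (norm (G (w s x)))\<^sup>2) + 2 * noise_var_bound * ln (1 / delta)} \<le> delta"
proof -
  interpret dominated_mds M Fl "\<lambda>s x. 1 * grad_noise s x" "\<lambda>s x. 1 * grad_noise_dom s x"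
    "1 * (grad_max * noise_max)" T
    by (rule dominated_mds_grad_noise) auto
  have "(1 * grad_noise_dom s x)\<^sup>2 \<le> noise_var_bound * (norm (G (w s x)))\<^sup>2" for s x
  proof (cases "on_track s x = 1")
    case True
    then have "(norm (G (w s x)))\<^sup>2 * (noise_level s x)\<^sup>2 \<le> (norm (G (w s x)))\<^sup>2 * noise_var_bound"
      using noise_level_sq_le_on_track by (intro mult_left_mono) auto
    then show ?thesis using True by (simp add: grad_noise_dom_def power_mult_distrib mult.commute)
  next
    case False
    then show ?thesis using on_track_cases[of s x] noise_var_bound_nonneg by (simp add: grad_noise_dom_def)
  qed
  then have "prob {x \<in> space M. (\<Sum>s=1..T. 1 * grad_noise s x) > 1/4 * (\<Sum>s=1..T. (norm (G (w s x)))\<^sup>2)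
               + noise_var_bound * ln (1 / delta) / (2 * (1/4))} \<le> delta"
    using noise_var_bound_nonneg delta by (intro tail_bound_scaled) auto
  then show ?thesis by (simp add: ac_simps)
qed

definition descent_gain :: "nat \<Rightarrow> 'a \<Rightarrow> real" where
  "descent_gain t x = on_track t x * (eta / dec_denom t x) * (norm (G (w t x)))\<^sup>2"

lemma descent_gain_borel_measurable: "t \<ge> 1 \<Longrightarrow> descent_gain t \<in> borel_measurable M"
  using measurable_from_subalg[OF subalgebra_Fl on_track_measurable_Fl]
    measurable_from_subalg[OF subalgebra_Fl dec_denom_measurable_Fl]
  unfolding descent_gain_def by measurable

lemma descent_noise_tail:
  assumes t: "t \<in> {1..T}"
  shows "prob {x \<in> space M. (\<Sum>s=1..t. eta / dec_denom s x * grad_noise s x)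
           > 3/4 * (\<Sum>s=1..t. descent_gain s x) + 2/3 * eta * noise_bound * ln (T / delta)} \<le> delta / T"
proof -
  interpret dominated_mds M Fl "\<lambda>s x. eta / dec_denom s x * grad_noise s x"
    "\<lambda>s x. eta / dec_denom s x * grad_noise_dom s x" "eta / gamma * (grad_max * noise_max)" t
    using t eta_div_dec_denom_le dec_denom_measurable_Fl by (intro dominated_mds_grad_noise) auto
  have "(eta / dec_denom s x * grad_noise_dom s x)\<^sup>2 \<le> eta * noise_bound * descent_gain s x" for s x
  proof (cases "on_track s x = 1")
    case True
    have "(eta / dec_denom s x * grad_noise_dom s x)\<^sup>2
        = descent_gain s x * (eta * (noise_level s x / dec_denom s x) * noise_level s x)"
      using True by (simp add: grad_noise_dom_def descent_gain_def power2_eq_square)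
    also have "\<dots> \<le> descent_gain s x * (eta * 1 * noise_bound)"
      using True noise_level_le_dec_denom[of s x] dec_denom_pos[of s x] noise_level_nonneg[of s x]
        noise_level_le_on_track eta eta_div_dec_denom_le[of s x]
      by (intro mult_left_mono mult_mono) (auto simp: descent_gain_def)
    finally show ?thesis by (simp add: algebra_simps)
  next
    case False
    then show ?thesis using on_track_cases[of s x] by (simp add: grad_noise_dom_def descent_gain_def)
  qed
  moreover have "0 \<le> descent_gain s x" for s x
    unfolding descent_gain_def using on_track_cases[of s x] eta_div_dec_denom_le[of s x]
    by (intro mult_nonneg_nonneg) auto
  ultimately have "prob {x \<in> space M. (\<Sum>s=1..t. eta / dec_denom s x * grad_noise s x)
      > 3/4 * (\<Sum>s=1..t. descent_gain s x) + eta * noise_bound * ln (1 / (delta / T)) / (2 * (3/4))}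
      \<le> delta / T"
    using eta noise_bound_nonneg delta t by (intro tail_bound_scaled) auto
  then show ?thesis by (simp add: ac_simps)
qed

lemma descent_step_le:
  assumes s: "s \<ge> 1" and track: "on_track s x = 1"
    and noise_x: "norm (g s x - G (w s x)) \<le> noise_level s x"
  shows "- (eta / sqrt (acc_sq s x)) * (G (w s x) \<bullet> g s x)
     \<le> - 3/4 * descent_gain s x + eta / dec_denom s x * grad_noise s x
       + 9/4 * eta * noise_level s x * ((norm (g s x))\<^sup>2 / acc_sq s x)"
proof -
  have acc: "acc_sq s x = acc_sq (s - 1) x + (norm (g s x))\<^sup>2"
    using acc_sq_Suc[of "s - 1" x] s by simp
  have "(eta / dec_denom s x - eta / sqrt (acc_sq s x)) * (G (w s x) \<bullet> g s x)
      \<le> 1/4 * descent_gain s x + 9/4 * eta * noise_level s x * ((norm (g s x))\<^sup>2 / acc_sq s x)"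
    using stepsize_decorrelation_error[OF acc_sq_pos[of "s - 1" x] less_imp_le[OF eta] noise_level_nonneg noise_x]
      acc_sq_pos[of s x]
    unfolding acc[symmetric] by (simp add: dec_denom_def descent_gain_def track)
  moreover have "- (eta / dec_denom s x) * (G (w s x) \<bullet> g s x)
      = - descent_gain s x + eta / dec_denom s x * grad_noise s x"
    using track
    by (simp add: descent_gain_def grad_noise_def inner_diff_right power2_norm_eq_inner algebra_simps)
  moreover have "- (eta / sqrt (acc_sq s x)) * (G (w s x) \<bullet> g s x)
      = - (eta / dec_denom s x) * (G (w s x) \<bullet> g s x)
        + (eta / dec_denom s x - eta / sqrt (acc_sq s x)) * (G (w s x) \<bullet> g s x)"
    by (simp add: left_diff_distrib)
  ultimately show ?thesis by argo
qed

lemma descent_increment_le: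
  assumes "s \<ge> 1" "on_track s x = 1" "norm (g s x - G (w s x)) \<le> noise_level s x"
  shows "- (eta / sqrt (acc_sq s x)) * (G (w s x) \<bullet> g s x) + beta / 2 * eta\<^sup>2 * ((norm (g s x))\<^sup>2 / acc_sq s x)
     \<le> - 3/4 * descent_gain s x + eta / dec_denom s x * grad_noise s x
       + (9/4 * eta * noise_bound + beta / 2 * eta\<^sup>2) * ((norm (g s x))\<^sup>2 / acc_sq s x)"
proof -
  have "9/4 * eta * noise_level s x * ((norm (g s x))\<^sup>2 / acc_sq s x)
      \<le> 9/4 * eta * noise_bound * ((norm (g s x))\<^sup>2 / acc_sq s x)"
    using noise_level_le_on_track[OF assms(2)] eta acc_sq_pos[of s x]
    by (intro mult_right_mono mult_left_mono) auto
  moreover have "(9/4 * eta * noise_bound + beta / 2 * eta\<^sup>2) * ((norm (g s x))\<^sup>2 / acc_sq s x)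
      = 9/4 * eta * noise_bound * ((norm (g s x))\<^sup>2 / acc_sq s x)
        + beta / 2 * eta\<^sup>2 * ((norm (g s x))\<^sup>2 / acc_sq s x)"
    by (rule distrib_right)
  ultimately show ?thesis using descent_step_le[OF assms] by argo
qed

lemma descent_budget_le_F_bound:
  "Delta1 + 2/3 * eta * noise_bound * ln (T / delta)
     + (9/4 * eta * noise_bound + beta / 2 * eta\<^sup>2) * (ln 2 * C1) \<le> F_bound"
proof -
  have "ln (T / delta) = ln 2 * log_T_delta" by (simp add: log_T_delta_def log_def)
  moreover have "Delta1 + 2/3 * eta * noise_bound * ln 2 * log_T_delta + 9/4 * eta * noise_bound * ln 2 * C1
      + beta * eta\<^sup>2 / 2 * ln 2 * C1 \<le> F_bound"
    using self_bounding_constant[OF Delta1_nonneg log_T_delta_nonneg C1_nonneg less_imp_le[OF eta]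
        beta_nonneg sig0 sig1 _ _ F_bound_def] ln2_le_25_over_36
    by (simp add: noise_bound_def)
  ultimately show ?thesis by (simp add: algebra_simps)
qed

lemma suboptimality_step:
  assumes t: "t \<ge> 1" "Suc t \<le> T"
    and noise_x: "\<forall>s\<in>{1..T}. (norm (g s x - G (w s x)))\<^sup>2 \<le> sigma0\<^sup>2 + sigma1\<^sup>2 * (norm (G (w s x)))\<^sup>2"
    and tail: "(\<Sum>s=1..t. eta / dec_denom s x * grad_noise s x)
      \<le> 3/4 * (\<Sum>s=1..t. descent_gain s x) + 2/3 * eta * noise_bound * ln (T / delta)"
    and track: "\<forall>s\<in>{1..t}. on_track s x = 1"
  shows "f (w (Suc t) x) - fstar \<le> F_bound"
proof -
  define q where "q s = (norm (g s x))\<^sup>2 / acc_sq s x" for s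
  define c where "c = 9/4 * eta * noise_bound + beta / 2 * eta\<^sup>2"
  have c: "c \<ge> 0" unfolding c_def using eta noise_bound_nonneg beta_nonneg by simp
  have step: "- (eta / sqrt (acc_sq s x)) * (G (w s x) \<bullet> g s x) + beta / 2 * eta\<^sup>2 * q s
      \<le> - 3/4 * descent_gain s x + eta / dec_denom s x * grad_noise s x + c * q s"
    if s: "s \<in> {1..t}" for s
  proof -
    have "norm (g s x - G (w s x)) \<le> noise_level s x"
      using noise_x s t unfolding noise_level_def by (auto intro: real_le_rsqrt)
    then show ?thesis using descent_increment_le[of s x] s track by (simp add: q_def c_def)
  qed
  have "f (w (Suc t) x) \<le> f w1 + (\<Sum>s=1..t. - (eta / sqrt (acc_sq s x)) * (G (w s x) \<bullet> g s x) + beta / 2 * eta\<^sup>2 * q s)"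
    using f_w_Suc_le_sum[OF t(1)] by (simp add: q_def)
  also have "\<dots> \<le> f w1 + (\<Sum>s=1..t. - 3/4 * descent_gain s x + eta / dec_denom s x * grad_noise s x + c * q s)"
    using step by (intro add_left_mono sum_mono) auto
  also have "\<dots> = f w1 - 3/4 * (\<Sum>s=1..t. descent_gain s x) + (\<Sum>s=1..t. eta / dec_denom s x * grad_noise s x)
      + c * (\<Sum>s=1..t. q s)"
    by (simp add: sum.distrib sum_subtractf sum_divide_distrib sum_distrib_left)
  also have "\<dots> \<le> f w1 + 2/3 * eta * noise_bound * ln (T / delta) + c * (ln 2 * C1)"
  proof -
    have "c * (\<Sum>s=1..t. q s) \<le> c * (ln 2 * C1)"
      using sum_sq_ratio_le_C1[OF noise_x, of t] t c by (intro mult_left_mono) (auto simp: q_def)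
    then show ?thesis using tail by linarith
  qed
  also have "\<dots> \<le> fstar + F_bound"
    using descent_budget_le_F_bound unfolding c_def Delta1_def by linarith
  finally show ?thesis by simp
qed

lemma suboptimality_le_F_bound:
  assumes noise_x: "\<forall>s\<in>{1..T}. (norm (g s x - G (w s x)))\<^sup>2 \<le> sigma0\<^sup>2 + sigma1\<^sup>2 * (norm (G (w s x)))\<^sup>2"
    and tails: "\<forall>t\<in>{1..T}. (\<Sum>s=1..t. eta / dec_denom s x * grad_noise s x)
      \<le> 3/4 * (\<Sum>s=1..t. descent_gain s x) + 2/3 * eta * noise_bound * ln (T / delta)"
  shows "\<forall>t\<in>{1..T}. f (w t x) - fstar \<le> F_bound"
proof -
  have "\<forall>s\<in>{1..t}. f (w s x) - fstar \<le> F_bound" if "t \<le> T" for t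
    using that
  proof (induction t)
    case (Suc t)
    then have IH: "\<forall>s\<in>{1..t}. f (w s x) - fstar \<le> F_bound" by simp
    have "f (w (Suc t) x) - fstar \<le> F_bound"
    proof (cases "t = 0")
      case True
      then show ?thesis using F_bound_ge Delta1_nonneg by (simp add: Delta1_def)
    next
      case False
      then show ?thesis
        using suboptimality_step[OF _ Suc.prems noise_x] tails IH Suc.prems by (simp add: on_track_def)
    qed
    then show ?case using IH by (auto simp: le_Suc_eq)
  qed simp
  then show ?thesis by auto
qed

lemma prob_suboptimality_gt_le:
  "prob {x \<in> space M. \<exists>t\<in>{1..T}. f (w t x) - fstar > F_bound} \<le> delta"
proof (cases "T = 0")
  case True
  then show ?thesis using delta by simp
next
  case False
  define E where "E t = {x \<in> space M. (\<Sum>s=1..t. eta / dec_denom s x * grad_noise s x)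
      > 3/4 * (\<Sum>s=1..t. descent_gain s x) + 2/3 * eta * noise_bound * ln (T / delta)}" for t
  have E_sets: "E t \<in> sets M" for t
    unfolding E_def using descent_noise_borel_measurable descent_gain_borel_measurable by measurable
  have "AE x in M. \<forall>s\<in>{1..T}. (norm (g s x - G (w s x)))\<^sup>2 \<le> sigma0\<^sup>2 + sigma1\<^sup>2 * (norm (G (w s x)))\<^sup>2"
    by (intro AE_finite_allI) (auto intro!: noise)
  then have "AE x in M. x \<in> {x \<in> space M. \<exists>t\<in>{1..T}. f (w t x) - fstar > F_bound} \<longrightarrow> x \<in> (\<Union>t\<in>{1..T}. E t)"
  proof (rule AE_mp[OF _ AE_I2], intro impI)
    fix x assume x: "x \<in> space M"
      and noise_x: "\<forall>s\<in>{1..T}. (norm (g s x - G (w s x)))\<^sup>2 \<le> sigma0\<^sup>2 + sigma1\<^sup>2 * (norm (G (w s x)))\<^sup>2"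
      and bad: "x \<in> {x \<in> space M. \<exists>t\<in>{1..T}. f (w t x) - fstar > F_bound}"
    show "x \<in> (\<Union>t\<in>{1..T}. E t)"
    proof (rule ccontr)
      assume "x \<notin> (\<Union>t\<in>{1..T}. E t)"
      then have "\<forall>t\<in>{1..T}. (\<Sum>s=1..t. eta / dec_denom s x * grad_noise s x)
          \<le> 3/4 * (\<Sum>s=1..t. descent_gain s x) + 2/3 * eta * noise_bound * ln (T / delta)"
        using x by (auto simp: E_def not_less)
      then show False using suboptimality_le_F_bound[OF noise_x] bad by force
    qed
  qed
  then have "prob {x \<in> space M. \<exists>t\<in>{1..T}. f (w t x) - fstar > F_bound} \<le> prob (\<Union>t\<in>{1..T}. E t)"
    using E_sets by (intro finite_measure_mono_AE) auto
  also have "\<dots> \<le> (\<Sum>t\<in>{1..T}. prob (E t))"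
    using E_sets by (intro finite_measure_subadditive_finite) auto
  also have "\<dots> \<le> (\<Sum>t\<in>{1..T}. delta / T)"
    unfolding E_def using descent_noise_tail by (intro sum_mono) auto
  also have "\<dots> = delta" using False by simp
  finally show ?thesis .
qed

lemma prob_inner_grad_noise_le:
  "prob {x \<in> space M. (\<Sum>t=1..T. G (w t x) \<bullet> (G (w t x) - g t x))
      \<le> 1/4 * (\<Sum>t=1..T. (norm (G (w t x)))\<^sup>2) + 3 * noise_var_bound * log 2 (1 / delta)}
    \<ge> 1 - 2 * delta"
proof -
  define S where "S = {x \<in> space M. (\<Sum>t=1..T. G (w t x) \<bullet> (G (w t x) - g t x))
      \<le> 1/4 * (\<Sum>t=1..T. (norm (G (w t x)))\<^sup>2) + 3 * noise_var_bound * log 2 (1 / delta)}"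
  define bad_f where "bad_f = {x \<in> space M. \<exists>t\<in>{1..T}. f (w t x) - fstar > F_bound}"
  define bad_noise where "bad_noise = {x \<in> space M. (\<Sum>t=1..T. grad_noise t x)
      > 1/4 * (\<Sum>t=1..T. (norm (G (w t x)))\<^sup>2) + 2 * noise_var_bound * ln (1 / delta)}"
  have sets: "S \<in> sets M" "bad_f \<in> sets M" "bad_noise \<in> sets M"
    unfolding S_def bad_f_def bad_noise_def
    using sets_sum_inner_noise_le grad_noise_borel_measurable by measurable
  have "ln (1 / delta) \<le> log 2 (1 / delta)" "0 \<le> ln (1 / delta)"
    using delta by (auto intro!: ln_le_log2)
  then have threshold: "2 * noise_var_bound * ln (1 / delta) \<le> 3 * noise_var_bound * log 2 (1 / delta)"
    using noise_var_bound_nonneg by (intro mult_mono) auto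
  then have "space M - S \<subseteq> bad_f \<union> bad_noise"
  proof (intro subsetI)
    fix x assume x: "x \<in> space M - S"
    show "x \<in> bad_f \<union> bad_noise"
    proof (rule ccontr)
      assume "x \<notin> bad_f \<union> bad_noise"
      then have "\<forall>t\<in>{1..T}. f (w t x) - fstar \<le> F_bound"
        and "(\<Sum>t=1..T. grad_noise t x) \<le> 1/4 * (\<Sum>t=1..T. (norm (G (w t x)))\<^sup>2)
               + 2 * noise_var_bound * ln (1 / delta)"
        using x by (auto simp: bad_f_def bad_noise_def not_less)
      then show False using x threshold sum_inner_eq_sum_grad_noise by (auto simp: S_def)
    qed
  qed
  then have "prob (space M - S) \<le> prob (bad_f \<union> bad_noise)"
    using sets by (intro finite_measure_mono) auto
  also have "\<dots> \<le> prob bad_f + prob bad_noise"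
    using sets by (intro measure_Un_le)
  also have "\<dots> \<le> 2 * delta"
    using prob_suboptimality_gt_le grad_noise_tail unfolding bad_f_def bad_noise_def by simp
  finally show ?thesis using prob_compl[OF sets(1)] unfolding S_def by simp
qed

end

theorem lemma3:
  fixes M :: "'a measure"
    and f :: "'d::euclidean_space \<Rightarrow> real" and G :: "'d \<Rightarrow> 'd"
    and g :: "nat \<Rightarrow> 'a \<Rightarrow> 'd"
    and w1 :: 'd and beta fstar eta gamma sigma0 sigma1 delta :: real and T :: nat
  assumes "prob_space M"
    and grad: "\<And>x. (f has_derivative (\<lambda>h. G x \<bullet> h)) (at x)"
    and smooth: "\<And>x y. norm (G x - G y) \<le> beta * norm (x - y)"
    and fmin: "\<And>x. fstar \<le> f x" and fmin_att: "\<exists>x. f x = fstar"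
    and eta: "eta > 0" and gamma: "gamma > 0"
    and sig0: "sigma0 \<ge> 0" and sig1: "sigma1 \<ge> 0"
    and meas: "\<And>t. g t \<in> borel_measurable M"
    and unbiased: "\<And>t v. t \<in> {1..T} \<Longrightarrow>
       AE x in M. real_cond_exp M (nat_filt M g t) (\<lambda>x. g t x \<bullet> v) x
                  = G (ada_w w1 eta gamma g t x) \<bullet> v"
    and noise: "\<And>t. t \<in> {1..T} \<Longrightarrow>
       AE x in M. (norm (g t x - G (ada_w w1 eta gamma g t x)))\<^sup>2
                  \<le> sigma0\<^sup>2 + sigma1\<^sup>2 * (norm (G (ada_w w1 eta gamma g t x)))\<^sup>2"
    and delta: "0 < delta" "delta < 1"
  shows
    "let D1 = f w1 - fstar;
         C1 = log 2 (1 + (2 * sigma0\<^sup>2 * T + 8 * (1 + sigma1\<^sup>2) * (eta\<^sup>2 * beta\<^sup>2 * T ^ 3 + beta * D1 * T)) / gamma\<^sup>2);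
         F = 2 * D1 + (3 * log 2 (T / delta) + 4 * C1) * eta * sigma0
             + (9 * (log 2 (T / delta))\<^sup>2 + 16 * C1\<^sup>2) * eta\<^sup>2 * beta * sigma1\<^sup>2
             + eta\<^sup>2 * beta * C1
     in measure M {x \<in> space M.
          (\<Sum>t=1..T. G (ada_w w1 eta gamma g t x) \<bullet> (G (ada_w w1 eta gamma g t x) - g t x))
          \<le> 1/4 * (\<Sum>t=1..T. (norm (G (ada_w w1 eta gamma g t x)))\<^sup>2)
            + 3 * (sigma0\<^sup>2 + 2 * beta * sigma1\<^sup>2 * F) * log 2 (1 / delta)}
        \<ge> 1 - 2 * delta"
proof -
  interpret adasgd_conf M f G g w1 beta fstar eta gamma sigma0 sigma1 T delta
    by (intro adasgd_conf.intro adasgd.intro adasgd_axioms.intro adasgd_conf_axioms.intro)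
      (fact assms(1) grad smooth fmin eta gamma sig0 sig1 meas unbiased noise delta)+
  show ?thesis
    using prob_inner_grad_noise_le
    unfolding Let_def noise_var_bound_def F_bound_def C1_def log_T_delta_def Delta1_def .
qed

end
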